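(* Let $G\in\mathcal{U}$ and $v\in V(G)$. Let $e$ be an old edge of $G^v$, let $f$ be a new edge of $G^v$ and $f'$ its opposite edge. Then: (i) $e$ is lonely in $G^v$ if and only if $e$ is lonely in $G$ and no $v$-join of $G$ contains $e$. Moreover, $f'$ is not lonely in $G^v$. (ii) $f$ is lonely in $G^v$ if and only if $f'$ is lonely in $G$.
   Context: In a bridgeless cubic graph, an edge is lonely if it belongs to exactly one perfect matching. $\mathcal{U}$ denotes the class of 3-connected cubic graphs having at least one lonely edge. For a cubic graph $G$ and $v\in V(G)$ with neighbours $x_1,x_2,x_3$, $G^v$ denotes the cubic graph obtained by replacing $v$ by a triangle: delete $v$, add new vertices $v_1,v_2,v_3$, the edges $v_1v_2,v_2v_3,v_3v_1$ (the new edges), and the edges $v_ix_i$ for $i=1,2,3$. All other edges of $G^v$ (including $v_1x_1,v_2x_2,v_3x_3$) are old edges and are identified with the corresponding edges of $G$ (the edge $v_ix_i$ of $G^v$ is identified with $vx_i$ of $G$). For pairwise distinct $i,j,k\in\{1,2,3\}$, the edge $v_ix_i$ is called opposite to the new edge $v_jv_k$. For $v\in V(G)$, a $v$-join of $G$ is a spanning subgraph in which $v$ has degree $3$ and every other vertex has degree $1$. *)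

theory Defs
  imports Main
begin

definition graph :: "'a set \<Rightarrow> 'a set set \<Rightarrow> bool" where
  "graph V E \<longleftrightarrow> finite V \<and> (\<forall>e\<in>E. \<exists>a b. e = {a, b} \<and> a \<noteq> b \<and> a \<in> V \<and> b \<in> V)"

definition degree :: "'a set set \<Rightarrow> 'a \<Rightarrow> nat" where
  "degree F u = card {e \<in> F. u \<in> e}"

definition neighbours :: "'a set set \<Rightarrow> 'a \<Rightarrow> 'a set" where
  "neighbours E u = {w. {u, w} \<in> E}"

definition cubic :: "'a set \<Rightarrow> 'a set set \<Rightarrow> bool" where
  "cubic V E \<longleftrightarrow> graph V E \<and> (\<forall>u\<in>V. degree E u = 3)"

definition connected_on :: "'a set \<Rightarrow> 'a set set \<Rightarrow> bool" where
  "connected_on W E \<longleftrightarrow>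
     (\<forall>u\<in>W. \<forall>w\<in>W. (\<lambda>a b. a \<in> W \<and> b \<in> W \<and> {a, b} \<in> E)\<^sup>*\<^sup>* u w)"

definition three_connected :: "'a set \<Rightarrow> 'a set set \<Rightarrow> bool" where
  "three_connected V E \<longleftrightarrow> card V \<ge> 4 \<and>
     (\<forall>S. S \<subseteq> V \<and> card S \<le> 2 \<longrightarrow> connected_on (V - S) E)"

definition perfect_matching :: "'a set \<Rightarrow> 'a set set \<Rightarrow> 'a set set \<Rightarrow> bool" where
  "perfect_matching V E M \<longleftrightarrow> M \<subseteq> E \<and> (\<forall>u\<in>V. \<exists>!e. e \<in> M \<and> u \<in> e)"

definition lonely :: "'a set \<Rightarrow> 'a set set \<Rightarrow> 'a set \<Rightarrow> bool" where
  "lonely V E e \<longleftrightarrow> e \<in> E \<and> card {M. perfect_matching V E M \<and> e \<in> M} = 1"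

definition classU :: "'a set \<Rightarrow> 'a set set \<Rightarrow> bool" where
  "classU V E \<longleftrightarrow> cubic V E \<and> three_connected V E \<and> (\<exists>e\<in>E. lonely V E e)"

definition vjoin :: "'a set \<Rightarrow> 'a set set \<Rightarrow> 'a \<Rightarrow> 'a set set \<Rightarrow> bool" where
  "vjoin V E v J \<longleftrightarrow> J \<subseteq> E \<and> degree J v = 3 \<and> (\<forall>u\<in>V - {v}. degree J u = 1)"

text \<open>The graph G^v on vertex type 'a + 'a: old vertices are Inl u (u \<noteq> v);
  the new vertex v_i adjacent to neighbour x_i of v is named Inr x_i.\<close>
definition tri_vertices :: "'a set \<Rightarrow> 'a set set \<Rightarrow> 'a \<Rightarrow> ('a + 'a) set" where
  "tri_vertices V E v = Inl ` (V - {v}) \<union> Inr ` neighbours E v"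

text \<open>Identification of edges of G with old edges of G^v.\<close>
definition old_edge :: "'a \<Rightarrow> 'a set \<Rightarrow> ('a + 'a) set" where
  "old_edge v e = (if v \<in> e then (\<Union>x\<in>e - {v}. {Inr x, Inl x}) else Inl ` e)"

definition tri_edges :: "'a set \<Rightarrow> 'a set set \<Rightarrow> 'a \<Rightarrow> ('a + 'a) set set" where
  "tri_edges V E v = old_edge v ` E \<union>
     {{Inr y, Inr z} | y z. y \<in> neighbours E v \<and> z \<in> neighbours E v \<and> y \<noteq> z}"

end

theory Submission
  imports Defs
begin

text \<open>
  A perfect matching of \<open>G\<^sup>v\<close> either contains exactly one new edge \<open>f\<close>, and then its old
  edges form a perfect matching of \<open>G\<close> containing the edge opposite to \<open>f\<close>, or it contains all
  three edges leaving the triangle, and then its old edges form a \<open>v\<close>-join of \<open>G\<close>. Counting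
  the perfect matchings through a given edge therefore reduces everything to \<open>G\<close>, where two
  facts about 3-connected cubic graphs are needed. First, every edge lies in a perfect matching:
  otherwise Tutte's condition fails for \<open>G - a - b\<close>, and counting the edges that leave the
  barrier together with \<open>a, b\<close> shows that this set is independent, which \<open>ab\<close> contradicts. Second, if
  \<open>G\<close> has no \<open>v\<close>-join, then each edge \<open>vx\<close> lies in two perfect matchings: Tutte's condition
  fails for \<open>G - N[v]\<close>, which gives a barrier \<open>T \<supseteq> N(v)\<close> with \<open>{v}\<close> as one of its odd
  components, and switching a given matching along a cycle of \<open>T - {x}\<close> through the components
  of \<open>G - T\<close> yields a second one.
\<close>

section \<open>Connected components\<close>

definition reachable_in :: "'a set \<Rightarrow> 'a set set \<Rightarrow> 'a \<Rightarrow> 'a \<Rightarrow> bool" where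
  "reachable_in X E = (\<lambda>a b. a \<in> X \<and> b \<in> X \<and> {a, b} \<in> E)\<^sup>*\<^sup>*"

definition component :: "'a set \<Rightarrow> 'a set set \<Rightarrow> 'a \<Rightarrow> 'a set" where
  "component X E u = {w. reachable_in X E u w}"

definition components :: "'a set \<Rightarrow> 'a set set \<Rightarrow> 'a set set" where
  "components X E = component X E ` X"

definition odd_components :: "'a set \<Rightarrow> 'a set set \<Rightarrow> nat" where
  "odd_components X E = card {C \<in> components X E. odd (card C)}"

definition edge_closed :: "'a set \<Rightarrow> 'a set \<Rightarrow> 'a set set \<Rightarrow> bool" where
  "edge_closed Y X E \<longleftrightarrow> (\<forall>u\<in>Y. \<forall>w\<in>X. {u, w} \<in> E \<longrightarrow> w \<in> Y)"

lemma reachable_in_refl [simp]: "reachable_in X E u u"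
  by (simp add: reachable_in_def)

lemma reachable_in_step:
  "reachable_in X E u w \<Longrightarrow> w \<in> X \<Longrightarrow> z \<in> X \<Longrightarrow> {w, z} \<in> E \<Longrightarrow> reachable_in X E u z"
  unfolding reachable_in_def by (rule rtranclp.rtrancl_into_rtrancl) auto

lemma reachable_in_trans: "reachable_in X E u w \<Longrightarrow> reachable_in X E w z \<Longrightarrow> reachable_in X E u z"
  unfolding reachable_in_def by auto

lemma reachable_in_sym: "reachable_in X E u w \<Longrightarrow> reachable_in X E w u"
  unfolding reachable_in_def
proof (induction rule: rtranclp_induct)
  case (step y z)
  then have "(\<lambda>a b. a \<in> X \<and> b \<in> X \<and> {a, b} \<in> E) z y" by (auto simp: insert_commute)
  then show ?case using step.IH by (rule converse_rtranclp_into_rtranclp)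
qed simp

lemma reachable_in_mem: "reachable_in X E u w \<Longrightarrow> u \<in> X \<Longrightarrow> w \<in> X"
  unfolding reachable_in_def by (induction rule: rtranclp_induct) auto

lemma reachable_in_mono: "reachable_in Y E u w \<Longrightarrow> Y \<subseteq> X \<Longrightarrow> reachable_in X E u w"
  unfolding reachable_in_def
  by (induction rule: rtranclp_induct) (auto intro: rtranclp.rtrancl_into_rtrancl)

lemma reachable_in_edge_closed:
  assumes "edge_closed Y X E" "Y \<subseteq> X" "u \<in> Y" "reachable_in X E u w"
  shows "w \<in> Y \<and> reachable_in Y E u w"
  using assms(4) unfolding reachable_in_def
proof (induction rule: rtranclp_induct)
  case (step y z)
  then have "z \<in> Y" using assms(1) unfolding edge_closed_def by blast
  with step show ?case by (auto intro: rtranclp.rtrancl_into_rtrancl)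
qed (use assms in simp)

lemma edge_closed_Diff: "edge_closed Y X E \<Longrightarrow> edge_closed (X - Y) X E"
  unfolding edge_closed_def by (auto simp: insert_commute)

lemma edge_closed_Diff_both: "edge_closed C X E \<Longrightarrow> edge_closed (C - Z) (X - Z) E"
  unfolding edge_closed_def by blast

lemma component_self: "u \<in> component X E u"
  by (simp add: component_def)

lemma component_subset: "u \<in> X \<Longrightarrow> component X E u \<subseteq> X"
  by (auto simp: component_def intro: reachable_in_mem)

lemma component_eq: "w \<in> component X E u \<Longrightarrow> component X E w = component X E u"
  unfolding component_def
  by (blast intro: reachable_in_trans reachable_in_sym)

lemma componentsE:
  assumes "C \<in> components X E"
  obtains u where "u \<in> X" "C = component X E u"
  using assms unfolding components_def by blast

lemma componentsI: "u \<in> X \<Longrightarrow> component X E u \<in> components X E"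
  unfolding components_def by (rule imageI)

lemma components_subset: "C \<in> components X E \<Longrightarrow> C \<subseteq> X"
  by (metis componentsE component_subset)

lemma components_nonempty: "C \<in> components X E \<Longrightarrow> C \<noteq> {}"
  by (metis componentsE component_self empty_iff)

lemma components_eq: "C \<in> components X E \<Longrightarrow> D \<in> components X E \<Longrightarrow> x \<in> C \<Longrightarrow> x \<in> D \<Longrightarrow> C = D"
  by (metis componentsE component_eq)

lemma Union_components: "\<Union>(components X E) = X"
  using components_subset component_self componentsI by fast

lemma finite_components: "finite X \<Longrightarrow> finite (components X E)"
  by (simp add: components_def)

lemma components_edge_closed: "C \<in> components X E \<Longrightarrow> edge_closed C X E"
  unfolding components_def edge_closed_def component_def
  by (auto intro: reachable_in_step reachable_in_mem)

lemma components_reachable: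
  assumes C: "C \<in> components X E" and "u \<in> C" "w \<in> C"
  shows "reachable_in C E u w"
proof -
  have "C = component X E u" using C \<open>u \<in> C\<close> by (metis componentsE component_eq)
  then have "reachable_in X E u w" using \<open>w \<in> C\<close> by (simp add: component_def)
  then show ?thesis
    using reachable_in_edge_closed[OF components_edge_closed[OF C] components_subset[OF C] \<open>u \<in> C\<close>]
    by blast
qed

lemma edge_closed_connected_in_components:
  assumes "C \<subseteq> X" "edge_closed C X E" "u \<in> C" "\<forall>w\<in>C. reachable_in C E u w"
  shows "C \<in> components X E"
proof -
  have "component X E u = C"
    using reachable_in_edge_closed[OF assms(2,1,3)] assms(4) reachable_in_mono[OF _ assms(1)]
    unfolding component_def by blast
  then show ?thesis using componentsI[of u X E] assms(1,3) by auto
qed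

lemma components_of_component: "C \<in> components X E \<Longrightarrow> components C E = {C}"
proof -
  assume C: "C \<in> components X E"
  have "component C E u = C" if "u \<in> C" for u
    using components_reachable[OF C that] reachable_in_mem[of C E u] that
    unfolding component_def by blast
  then show ?thesis using components_nonempty[OF C] unfolding components_def by auto
qed

lemma components_split:
  assumes "Y \<subseteq> X" "edge_closed Y X E"
  shows "components X E = components Y E \<union> components (X - Y) E"
proof -
  have "component X E u = component Y E u" if "u \<in> Y" for u
    using reachable_in_edge_closed[OF assms(2,1) that] reachable_in_mono[OF _ assms(1)]
    unfolding component_def by blast
  moreover have "component X E u = component (X - Y) E u" if "u \<in> X - Y" for u
    using reachable_in_edge_closed[OF edge_closed_Diff[OF assms(2)] _ that]
      reachable_in_mono[of "X - Y" E u _ X]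
    unfolding component_def by blast
  moreover have "X = Y \<union> (X - Y)" using assms(1) by blast
  ultimately show ?thesis
    unfolding components_def by (metis (no_types, lifting) image_Un image_cong)
qed

lemma odd_components_split:
  assumes "finite X" "Y \<subseteq> X" "edge_closed Y X E"
  shows "odd_components X E = odd_components Y E + odd_components (X - Y) E"
proof -
  have "components Y E \<inter> components (X - Y) E = {}"
    using components_subset components_nonempty by blast
  moreover have "finite (components Y E)" "finite (components (X - Y) E)"
    using assms by (auto intro: finite_components finite_subset)
  ultimately show ?thesis
    unfolding odd_components_def components_split[OF assms(2,3)]
    by (subst card_Un_disjoint[symmetric]) (auto intro!: arg_cong[where f = card])
qed

lemma odd_components_component:
  assumes "C \<in> components X E"
  shows "odd_components C E = (if odd (card C) then 1 else 0)"
proof -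
  have "{D \<in> {C}. odd (card D)} = (if odd (card C) then {C} else {})" by auto
  then show ?thesis unfolding odd_components_def components_of_component[OF assms] by simp
qed

lemma odd_components_remove_from_component:
  assumes "finite X" "C \<in> components X E" "Z \<subseteq> C"
  shows "odd_components (X - Z) E = odd_components (C - Z) E + odd_components (X - C) E"
proof -
  have "edge_closed (C - Z) (X - Z) E"
    by (rule edge_closed_Diff_both[OF components_edge_closed[OF assms(2)]])
  moreover have "(X - Z) - (C - Z) = X - C" using assms(3) by blast
  ultimately show ?thesis
    using odd_components_split[of "X - Z" "C - Z" E] components_subset[OF assms(2)] assms(1)
    by auto
qed

lemma even_sum_iff_even_card_odd:
  "finite A \<Longrightarrow> even (\<Sum>C\<in>A. (f C :: nat)) \<longleftrightarrow> even (card {C\<in>A. odd (f C)})"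
proof (induction A rule: finite_induct)
  case (insert x F)
  have "{C \<in> insert x F. odd (f C)} =
      (if odd (f x) then insert x {C\<in>F. odd (f C)} else {C\<in>F. odd (f C)})"
    by auto
  with insert show ?case by (auto simp: card_insert_if)
qed simp

lemma card_eq_sum_components:
  assumes "finite X"
  shows "card X = (\<Sum>C\<in>components X E. card C)"
proof -
  have "card (\<Union>(components X E)) = (\<Sum>C\<in>components X E. card C)"
  proof (rule card_Union_disjoint)
    show "pairwise disjnt (components X E)"
      unfolding pairwise_def disjnt_def by (metis components_eq disjoint_iff)
    show "\<And>C. C \<in> components X E \<Longrightarrow> finite C"
      using assms components_subset finite_subset by metis
  qed
  then show ?thesis by (simp add: Union_components)
qed

lemma odd_components_parity:
  "finite X \<Longrightarrow> even (odd_components X E) \<longleftrightarrow> even (card X)"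
  unfolding odd_components_def
  by (simp add: card_eq_sum_components[of X E] even_sum_iff_even_card_odd finite_components)

section \<open>Hall's theorem\<close>

definition hall_condition :: "'i set \<Rightarrow> ('i \<Rightarrow> 'b set) \<Rightarrow> bool" where
  "hall_condition A f \<longleftrightarrow> (\<forall>X\<subseteq>A. card X \<le> card (\<Union>(f ` X)))"

lemma inj_on_glue:
  assumes "inj_on g1 X" "inj_on g2 Z" "g1 ` X \<subseteq> Y" "g2 ` Z \<inter> Y = {}"
  shows "inj_on (\<lambda>a. if a \<in> X then g1 a else g2 a) (X \<union> Z)"
proof (rule inj_onI)
  fix a b
  assume ab: "a \<in> X \<union> Z" "b \<in> X \<union> Z"
    and eq: "(if a \<in> X then g1 a else g2 a) = (if b \<in> X then g1 b else g2 b)"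
  show "a = b"
  proof (cases "a \<in> X"; cases "b \<in> X")
    assume "a \<in> X" "b \<notin> X"
    then show ?thesis using ab eq assms(3,4) by auto
  next
    assume "a \<notin> X" "b \<in> X"
    then show ?thesis using ab eq assms(3,4) by auto
  qed (use ab eq assms(1,2) in \<open>auto dest: inj_onD\<close>)
qed

lemma hall_condition_Diff_critical:
  assumes hall: "hall_condition A f" and fin: "finite A" "\<forall>a\<in>A. finite (f a)"
    and X: "X \<subseteq> A" "card (\<Union>(f ` X)) = card X"
  shows "hall_condition (A - X) (\<lambda>a. f a - \<Union>(f ` X))"
  unfolding hall_condition_def
proof (intro allI impI)
  fix Z assume Z: "Z \<subseteq> A - X"
  let ?Y = "\<Union>(f ` X)"
  have finU: "finite (\<Union>(f ` B))" if "B \<subseteq> A" for B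
    using that fin by (meson finite_UN_I finite_subset subsetD)
  have "card (\<Union>a\<in>Z. f a - ?Y) = card (\<Union>(f ` (Z \<union> X)) - ?Y)"
    by (rule arg_cong[where f = card]) auto
  also have "\<dots> = card (\<Union>(f ` (Z \<union> X))) - card X"
    using X finU[of X] Z by (subst card_Diff_subset) auto
  finally have eq: "card (\<Union>a\<in>Z. f a - ?Y) = card (\<Union>(f ` (Z \<union> X))) - card X" .
  have "card (Z \<union> X) \<le> card (\<Union>(f ` (Z \<union> X)))"
    using hall Z X(1) unfolding hall_condition_def by blast
  moreover have "card (Z \<union> X) = card Z + card X"
    using Z X(1) fin by (subst card_Un_disjoint) (auto intro: finite_subset)
  ultimately show "card Z \<le> card (\<Union>a\<in>Z. f a - ?Y)" unfolding eq by linarith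
qed

lemma hall_condition_remove:
  assumes strict: "\<And>X. X \<subseteq> A \<Longrightarrow> X \<noteq> {} \<Longrightarrow> X \<noteq> A \<Longrightarrow> card X < card (\<Union>(f ` X))"
    and a: "a \<in> A"
  shows "hall_condition (A - {a}) (\<lambda>b. f b - {y})"
  unfolding hall_condition_def
proof (intro allI impI)
  fix Z assume Z: "Z \<subseteq> A - {a}"
  show "card Z \<le> card (\<Union>b\<in>Z. f b - {y})"
  proof (cases "Z = {}")
    case False
    have eq: "(\<Union>b\<in>Z. f b - {y}) = \<Union>(f ` Z) - {y}" by auto
    have "card Z < card (\<Union>(f ` Z))" using strict[of Z] Z False a by blast
    moreover have "card (\<Union>(f ` Z)) \<le> card (\<Union>(f ` Z) - {y}) + 1"
      by (simp add: card_Diff_singleton_if; linarith)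
    ultimately show ?thesis unfolding eq by linarith
  qed simp
qed

theorem hall_marriage:
  assumes "finite A" "\<forall>a\<in>A. finite (f a)" "hall_condition A f"
  shows "\<exists>g. inj_on g A \<and> (\<forall>a\<in>A. g a \<in> f a)"
  using assms
proof (induction "card A" arbitrary: A f rule: less_induct)
  case less
  note fin = less.prems(1,2) and hall = less.prems(3)
  show ?case
  proof (cases "\<exists>X. X \<subseteq> A \<and> X \<noteq> {} \<and> X \<noteq> A \<and> card (\<Union>(f ` X)) \<le> card X")
    case True
    then obtain X where X: "X \<subseteq> A" "X \<noteq> {}" "X \<noteq> A" "card (\<Union>(f ` X)) \<le> card X" by blast
    let ?Y = "\<Union>(f ` X)"
    have critical: "card ?Y = card X" using X hall unfolding hall_condition_def by (simp add: le_antisym)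
    have "card X < card A" using X(1,3) fin(1) by (intro psubset_card_mono) auto
    moreover have "finite X" using X(1) fin(1) by (rule finite_subset)
    moreover have "hall_condition X f" using hall X(1) unfolding hall_condition_def by auto
    ultimately obtain g1 where g1: "inj_on g1 X" "\<forall>a\<in>X. g1 a \<in> f a"
      using less.hyps[of X f] fin(2) X(1) by auto
    have "card (A - X) < card A" using X(1,2) fin(1) by (intro psubset_card_mono) auto
    from less.hyps[OF this _ _ hall_condition_Diff_critical[OF hall fin X(1) critical]]
    obtain g2 where g2: "inj_on g2 (A - X)" "\<forall>a\<in>A - X. g2 a \<in> f a - ?Y"
      using fin by auto
    define g where "g a = (if a \<in> X then g1 a else g2 a)" for a
    have "inj_on g (X \<union> (A - X))"
      unfolding g_def by (rule inj_on_glue[OF g1(1) g2(1), where Y = ?Y]) (use g1(2) g2(2) in auto)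
    moreover have "X \<union> (A - X) = A" using X(1) by blast
    moreover have "g a \<in> f a" if "a \<in> A" for a
      using that g1(2) g2(2) unfolding g_def by (cases "a \<in> X") auto
    ultimately show ?thesis by auto
  next
    case False
    then have strict: "card X < card (\<Union>(f ` X))" if "X \<subseteq> A" "X \<noteq> {}" "X \<noteq> A" for X
      using that by (meson not_le)
    show ?thesis
    proof (cases "A = {}")
      case False
      then obtain a where a: "a \<in> A" by blast
      have "card {a} \<le> card (\<Union>(f ` {a}))" using hall a unfolding hall_condition_def by blast
      then obtain y where y: "y \<in> f a" by fastforce
      have "card (A - {a}) < card A" using fin(1) a by (rule card_Diff1_less)
      from less.hyps[OF this _ _ hall_condition_remove[OF strict a, of y]]
      obtain h where h: "inj_on h (A - {a})" "\<forall>b\<in>A - {a}. h b \<in> f b - {y}"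
        using fin by auto
      define g where "g b = (if b \<in> {a} then y else h b)" for b
      have "inj_on g ({a} \<union> (A - {a}))"
        unfolding g_def by (rule inj_on_glue[OF _ h(1), where Y = "{y}"]) (use h(2) in auto)
      moreover have "{a} \<union> (A - {a}) = A" using a by blast
      moreover have "g b \<in> f b" if "b \<in> A" for b
        using that h(2) y unfolding g_def by (cases "b = a") auto
      ultimately show ?thesis by auto
    qed simp
  qed
qed

section \<open>Perfect matchings and Tutte's theorem\<close>

definition induced_edges :: "'a set \<Rightarrow> 'a set set \<Rightarrow> 'a set set" where
  "induced_edges W E = {e \<in> E. e \<subseteq> W}"

lemma degree_eq_1_iff: "degree F u = 1 \<longleftrightarrow> (\<exists>!e. e \<in> F \<and> u \<in> e)"
proof
  assume "degree F u = 1"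
  then obtain e where e: "{e \<in> F. u \<in> e} = {e}" unfolding degree_def by (rule card_1_singletonE)
  show "\<exists>!e. e \<in> F \<and> u \<in> e"
  proof (rule ex1I[of _ e])
    fix e' assume "e' \<in> F \<and> u \<in> e'"
    then show "e' = e" using e by blast
  qed (use e in blast)
next
  assume "\<exists>!e. e \<in> F \<and> u \<in> e"
  then obtain e where "e \<in> F" "u \<in> e" "\<And>e'. e' \<in> F \<and> u \<in> e' \<Longrightarrow> e' = e" by blast
  then have "{e \<in> F. u \<in> e} = {e}" by blast
  then show "degree F u = 1" unfolding degree_def by simp
qed

lemma perfect_matching_unique:
  "perfect_matching V E M \<Longrightarrow> u \<in> V \<Longrightarrow> e \<in> M \<Longrightarrow> u \<in> e \<Longrightarrow> e' \<in> M \<Longrightarrow> u \<in> e' \<Longrightarrow> e = e'"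
  unfolding perfect_matching_def by blast

lemma perfect_matching_covers:
  "perfect_matching V E M \<Longrightarrow> u \<in> V \<Longrightarrow> \<exists>e\<in>M. u \<in> e"
  unfolding perfect_matching_def by blast

lemma perfect_matching_induced_edgesD:
  "perfect_matching X (induced_edges X E) M \<Longrightarrow> e \<in> M \<Longrightarrow> e \<in> E \<and> e \<subseteq> X"
  unfolding perfect_matching_def induced_edges_def by blast

lemma perfect_matching_UN:
  assumes pm: "\<And>i. i \<in> I \<Longrightarrow> perfect_matching (X i) (induced_edges (X i) E) (M i)"
    and disj: "\<And>i j. i \<in> I \<Longrightarrow> j \<in> I \<Longrightarrow> i \<noteq> j \<Longrightarrow> X i \<inter> X j = {}"
  shows "perfect_matching (\<Union>i\<in>I. X i) (induced_edges (\<Union>i\<in>I. X i) E) (\<Union>i\<in>I. M i)"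
  unfolding perfect_matching_def
proof (intro conjI ballI)
  show "(\<Union>i\<in>I. M i) \<subseteq> induced_edges (\<Union>i\<in>I. X i) E"
    using perfect_matching_induced_edgesD[OF pm] unfolding induced_edges_def by blast
  fix u assume "u \<in> (\<Union>i\<in>I. X i)"
  then obtain i where i: "i \<in> I" "u \<in> X i" by blast
  then obtain e where e: "e \<in> M i" "u \<in> e" using perfect_matching_covers[OF pm] by blast
  show "\<exists>!e. e \<in> (\<Union>i\<in>I. M i) \<and> u \<in> e"
  proof (rule ex1I[of _ e])
    fix e' assume e': "e' \<in> (\<Union>i\<in>I. M i) \<and> u \<in> e'"
    then obtain j where j: "j \<in> I" "e' \<in> M j" by blast
    then have "i = j" using disj[OF i(1) j(1)] perfect_matching_induced_edgesD[OF pm[OF j(1)]] e' i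
      by blast
    then show "e' = e" using perfect_matching_unique[OF pm[OF i(1)] i(2) _ _ e] e' j by blast
  qed (use e i in blast)
qed

lemma perfect_matching_Un:
  assumes X: "perfect_matching X (induced_edges X E) M"
    and Y: "perfect_matching Y (induced_edges Y E) N" and disjoint: "X \<inter> Y = {}"
  shows "perfect_matching (X \<union> Y) (induced_edges (X \<union> Y) E) (M \<union> N)"
  unfolding perfect_matching_def
proof (intro conjI ballI)
  show "M \<union> N \<subseteq> induced_edges (X \<union> Y) E"
    using perfect_matching_induced_edgesD[OF X] perfect_matching_induced_edgesD[OF Y]
    unfolding induced_edges_def by blast
  fix u assume "u \<in> X \<union> Y"
  then show "\<exists>!e. e \<in> M \<union> N \<and> u \<in> e"
  proof
    assume u: "u \<in> X"
    have "e \<notin> N" if "u \<in> e" for e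
      using perfect_matching_induced_edgesD[OF Y, of e] that u disjoint by blast
    then show ?thesis using X u unfolding perfect_matching_def by blast
  next
    assume u: "u \<in> Y"
    have "e \<notin> M" if "u \<in> e" for e
      using perfect_matching_induced_edgesD[OF X, of e] that u disjoint by blast
    then show ?thesis using Y u unfolding perfect_matching_def by blast
  qed
qed

lemma perfect_matching_edge:
  assumes "{a, b} \<in> E"
  shows "perfect_matching {a, b} (induced_edges {a, b} E) {{a, b}}"
  unfolding perfect_matching_def induced_edges_def
proof (intro conjI ballI)
  show "{{a, b}} \<subseteq> {e \<in> E. e \<subseteq> {a, b}}" using assms by simp
  fix u assume "u \<in> {a, b}"
  then show "\<exists>!e. e \<in> {{a, b}} \<and> u \<in> e" by blast
qed

lemma perfect_matching_insert_edge:
  assumes "perfect_matching X (induced_edges X E) M" "{a, b} \<in> E" "a \<notin> X" "b \<notin> X"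
  shows "perfect_matching (insert a (insert b X)) (induced_edges (insert a (insert b X)) E)
      (insert {a, b} M)"
  using perfect_matching_Un[OF perfect_matching_edge[OF assms(2)] assms(1)] assms(3,4) by simp

lemma perfect_matching_restrict:
  assumes pm: "perfect_matching V E M" and "X \<subseteq> V"
    and closed: "\<And>e. e \<in> M \<Longrightarrow> e \<inter> X \<noteq> {} \<Longrightarrow> e \<subseteq> X"
  shows "perfect_matching X (induced_edges X E) {e \<in> M. e \<subseteq> X}"
  unfolding perfect_matching_def
proof (intro conjI ballI)
  show "{e \<in> M. e \<subseteq> X} \<subseteq> induced_edges X E"
    using pm unfolding perfect_matching_def induced_edges_def by blast
  fix u assume u: "u \<in> X"
  then obtain e where e: "e \<in> M" "u \<in> e" using perfect_matching_covers[OF pm] \<open>X \<subseteq> V\<close> by blast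
  then have "e \<subseteq> X" using closed u by blast
  show "\<exists>!e. e \<in> {e \<in> M. e \<subseteq> X} \<and> u \<in> e"
  proof (rule ex1I[of _ e])
    fix e' assume "e' \<in> {e \<in> M. e \<subseteq> X} \<and> u \<in> e'"
    then show "e' = e" using perfect_matching_unique[OF pm _ _ _ e] u \<open>X \<subseteq> V\<close> by blast
  qed (use e \<open>e \<subseteq> X\<close> in blast)
qed

lemma induced_edges_eq: "(\<And>e. e \<in> E \<Longrightarrow> e \<subseteq> V) \<Longrightarrow> induced_edges V E = E"
  unfolding induced_edges_def by blast

definition tutte_condition :: "'a set \<Rightarrow> 'a set set \<Rightarrow> bool" where
  "tutte_condition W E \<longleftrightarrow> (\<forall>S\<subseteq>W. odd_components (W - S) E \<le> card S)"

text \<open>Anderson's proof of Tutte's theorem: take a barrier \<open>S\<close> of maximum size. Then all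
  components of \<open>W - S\<close> are odd, each of them stays matchable after deleting any vertex, and
  Hall's theorem matches the components to distinct vertices of \<open>S\<close>.\<close>

locale maximal_barrier =
  fixes W :: "'a set" and E :: "'a set set" and S :: "'a set"
  assumes finite_W: "finite W" and tutte: "tutte_condition W E"
    and S_subset: "S \<subseteq> W" and barrier: "odd_components (W - S) E = card S"
    and maximal: "\<And>S'. S' \<subseteq> W \<Longrightarrow> odd_components (W - S') E = card S' \<Longrightarrow> card S' \<le> card S"
begin

lemma finite_S: "finite S"
  using S_subset finite_W finite_subset by blast

lemma even_odd_components_iff: "S' \<subseteq> W \<Longrightarrow> even (odd_components (W - S') E) \<longleftrightarrow> even (card S')"
proof -
  assume S': "S' \<subseteq> W"
  have "finite S'" using S' finite_W finite_subset by blast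
  then have "card W = card S + card (W - S)" "card W = card S' + card (W - S')"
    using card_Diff_subset[OF finite_S S_subset] card_Diff_subset[OF _ S']
      card_mono[OF finite_W S_subset] card_mono[OF finite_W S'] by simp_all
  moreover have "even (odd_components (W - S) E) \<longleftrightarrow> even (card (W - S))"
    "even (odd_components (W - S') E) \<longleftrightarrow> even (card (W - S'))"
    using odd_components_parity finite_W by blast+
  ultimately show ?thesis using barrier by presburger
qed

text \<open>Enlarging the barrier: maximality of \<open>S\<close> makes Tutte's inequality strict, and parity
  then gains a second unit.\<close>

lemma odd_components_add:
  assumes T: "T \<subseteq> W - S" "T \<noteq> {}"
  shows "odd_components (W - S - T) E + 2 \<le> card S + card T"
proof -
  have S'W: "S \<union> T \<subseteq> W" and eq: "W - (S \<union> T) = W - S - T" using S_subset T by auto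
  have finT: "finite T" using T finite_W finite_subset by blast
  have card: "card (S \<union> T) = card S + card T"
    using T finite_S finT by (subst card_Un_disjoint) auto
  have "card T > 0" using T finT by (simp add: card_gt_0_iff)
  then have "odd_components (W - (S \<union> T)) E \<noteq> card (S \<union> T)" using maximal[OF S'W] card by linarith
  moreover have "odd_components (W - (S \<union> T)) E \<le> card (S \<union> T)"
    using tutte S'W unfolding tutte_condition_def by blast
  moreover have "even (odd_components (W - (S \<union> T)) E) \<longleftrightarrow> even (card (S \<union> T))"
    by (rule even_odd_components_iff[OF S'W])
  ultimately show ?thesis unfolding eq card by presburger
qed

lemma odd_components_Diff_component:
  assumes C: "C \<in> components (W - S) E"
  shows "odd_components (W - S - C) E + (if odd (card C) then 1 else 0) = card S"
  using odd_components_remove_from_component[OF _ C, of "{}"] odd_components_component[OF C]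
    barrier finite_W by simp

lemma components_odd:
  assumes C: "C \<in> components (W - S) E"
  shows "odd (card C)"
proof (rule ccontr)
  assume even: "\<not> odd (card C)"
  obtain u where u: "u \<in> C" using components_nonempty[OF C] by blast
  have CW: "C \<subseteq> W - S" using components_subset[OF C] .
  have finC: "finite C" using CW finite_W finite_subset by blast
  have "card (C - {u}) = card C - 1" "card C > 0"
    using finC u by (auto simp: card_Diff_singleton card_gt_0_iff)
  then have "odd (card (C - {u}))" using even by presburger
  then have "odd_components (C - {u}) E \<ge> 1"
    using odd_components_parity[of "C - {u}" E] finC by (cases "odd_components (C - {u}) E") auto
  then have "odd_components (W - S - {u}) E \<ge> 1 + card S"
    using odd_components_remove_from_component[OF _ C, of "{u}"] odd_components_Diff_component[OF C]
      even u finite_W by simp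
  moreover have "odd_components (W - S - {u}) E + 2 \<le> card S + 1"
    using odd_components_add[of "{u}"] u CW by auto
  ultimately show False by linarith
qed

lemma tutte_condition_component_Diff:
  assumes C: "C \<in> components (W - S) E" and u: "u \<in> C"
  shows "tutte_condition (C - {u}) E"
  unfolding tutte_condition_def
proof (intro allI impI)
  fix T assume T: "T \<subseteq> C - {u}"
  have CW: "C \<subseteq> W - S" using components_subset[OF C] .
  have "finite T" using T CW finite_W by (meson Diff_subset finite_subset subset_trans)
  moreover have "u \<notin> T" using T by blast
  ultimately have card: "card (insert u T) = card T + 1" by simp
  have "C - insert u T = C - {u} - T" by blast
  then have "odd_components (W - S - insert u T) E =
      odd_components (C - {u} - T) E + odd_components (W - S - C) E"
    using odd_components_remove_from_component[OF _ C, of "insert u T"] finite_W T u by auto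
  moreover have "odd_components (W - S - C) E + 1 = card S"
    using odd_components_Diff_component[OF C] components_odd[OF C] by simp
  moreover have "odd_components (W - S - insert u T) E + 2 \<le> card S + card (insert u T)"
    using odd_components_add[of "insert u T"] T u CW by auto
  ultimately show "odd_components (C - {u} - T) E \<le> card T" using card by linarith
qed

lemma card_components: "card (components (W - S) E) = card S"
proof -
  have "{C \<in> components (W - S) E. odd (card C)} = components (W - S) E"
    using components_odd by blast
  then show ?thesis using barrier unfolding odd_components_def by simp
qed

definition attachments :: "'a set \<Rightarrow> 'a set" where
  "attachments C = {s \<in> S. \<exists>u\<in>C. {s, u} \<in> E}"

lemma hall_condition_attachments: "hall_condition (components (W - S) E) attachments"
  unfolding hall_condition_def
proof (intro allI impI; rule ccontr)
  fix X assume X: "X \<subseteq> components (W - S) E" and "\<not> card X \<le> card (\<Union>(attachments ` X))"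
  then have lt: "card (\<Union>(attachments ` X)) < card X" by simp
  define T where "T = \<Union>(attachments ` X)"
  have TS: "T \<subseteq> S" unfolding T_def attachments_def by auto
  have "C \<in> components (W - T) E" if CX: "C \<in> X" for C
  proof -
    have C: "C \<in> components (W - S) E" using X CX by blast
    have CWT: "C \<subseteq> W - T" using components_subset[OF C] TS by auto
    have "edge_closed C (W - T) E"
      unfolding edge_closed_def
    proof (intro ballI impI)
      fix u w assume u: "u \<in> C" and w: "w \<in> W - T" and e: "{u, w} \<in> E"
      have "w \<notin> S"
      proof
        assume "w \<in> S"
        then have "w \<in> attachments C" unfolding attachments_def using u e by (auto simp: insert_commute)
        then show False using w CX unfolding T_def by blast
      qed
      then show "w \<in> C" using components_edge_closed[OF C] u w e unfolding edge_closed_def by blast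
    qed
    moreover obtain u where "u \<in> C" using components_nonempty[OF C] by blast
    ultimately show ?thesis
      using edge_closed_connected_in_components[OF CWT] components_reachable[OF C] by blast
  qed
  then have "X \<subseteq> {C \<in> components (W - T) E. odd (card C)}" using X components_odd by blast
  then have "card X \<le> odd_components (W - T) E"
    unfolding odd_components_def using finite_W by (intro card_mono) (simp_all add: finite_components)
  also have "\<dots> \<le> card T" using tutte TS S_subset unfolding tutte_condition_def by auto
  finally show False using lt unfolding T_def by simp
qed

lemma perfect_matching_if_components_matchable:
  assumes matchable: "\<And>C u. C \<in> components (W - S) E \<Longrightarrow> u \<in> C \<Longrightarrow>
      \<exists>M. perfect_matching (C - {u}) (induced_edges (C - {u}) E) M"
  shows "\<exists>M. perfect_matching W (induced_edges W E) M"
proof -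
  let ?A = "components (W - S) E"
  have "finite ?A" using finite_W by (simp add: finite_components)
  moreover have "\<forall>C\<in>?A. finite (attachments C)"
    using finite_S unfolding attachments_def by auto
  ultimately obtain g where g: "inj_on g ?A" "\<forall>C\<in>?A. g C \<in> attachments C"
    using hall_marriage[OF _ _ hall_condition_attachments] by blast
  have gS: "g C \<in> S" if "C \<in> ?A" for C using g(2) that unfolding attachments_def by blast
  then have "g ` ?A \<subseteq> S" by blast
  then have "g ` ?A = S"
    using card_subset_eq[OF finite_S] card_image[OF g(1)] card_components by simp
  have "\<forall>C\<in>?A. \<exists>x. x \<in> C \<and> {g C, x} \<in> E"
    using g(2) unfolding attachments_def by (auto simp: insert_commute)
  from bchoice[OF this] obtain u where u: "\<forall>C\<in>?A. u C \<in> C \<and> {g C, u C} \<in> E" by blast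
  have "\<forall>C\<in>?A. \<exists>M. perfect_matching (C - {u C}) (induced_edges (C - {u C}) E) M"
    using matchable u by blast
  from bchoice[OF this] obtain MC
    where MC: "\<forall>C\<in>?A. perfect_matching (C - {u C}) (induced_edges (C - {u C}) E) (MC C)" by blast
  have piece: "perfect_matching (insert (g C) C) (induced_edges (insert (g C) C) E)
      (insert {g C, u C} (MC C))" if C: "C \<in> ?A" for C
  proof -
    have "g C \<notin> C" using gS[OF C] components_subset[OF C] by blast
    moreover have "insert (u C) (C - {u C}) = C" using u C by blast
    ultimately show ?thesis
      using perfect_matching_insert_edge[of "C - {u C}" E "MC C" "g C" "u C"] MC u C by auto
  qed
  have disjoint: "insert (g C) C \<inter> insert (g D) D = {}" if "C \<in> ?A" "D \<in> ?A" "C \<noteq> D" for C D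
  proof -
    have "C \<inter> D = {}" using components_eq[OF that(1,2)] that(3) by blast
    moreover have "g C \<noteq> g D" using inj_onD[OF g(1) _ that(1,2)] that(3) by blast
    moreover have "g C \<notin> D" "g D \<notin> C"
      using gS that components_subset[OF that(1)] components_subset[OF that(2)] by blast+
    ultimately show ?thesis by blast
  qed
  have "(\<Union>C\<in>?A. insert (g C) C) = g ` ?A \<union> \<Union>?A" by blast
  also have "\<dots> = W" using \<open>g ` ?A = S\<close> Union_components[of "W - S" E] S_subset by blast
  finally show ?thesis
    using perfect_matching_UN[of ?A "\<lambda>C. insert (g C) C" E "\<lambda>C. insert {g C, u C} (MC C)"]
      piece disjoint by metis
qed

end

theorem tutte_perfect_matching:
  assumes "finite W" "tutte_condition W E"
  shows "\<exists>M. perfect_matching W (induced_edges W E) M"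
  using assms
proof (induction "card W" arbitrary: W rule: less_induct)
  case less
  let ?barrier = "\<lambda>S. S \<subseteq> W \<and> odd_components (W - S) E = card S"
  have "?barrier {}" using less.prems(2) unfolding tutte_condition_def by auto
  moreover have "\<forall>S. ?barrier S \<longrightarrow> card S < card W + 1"
  proof (intro allI impI)
    fix S assume "?barrier S"
    then have "card S \<le> card W" using less.prems(1) by (intro card_mono) auto
    then show "card S < card W + 1" by simp
  qed
  ultimately obtain S where S: "?barrier S" "\<forall>S'. ?barrier S' \<longrightarrow> card S' \<le> card S"
    by (rule Lattices_Big.ex_has_greatest_nat[THEN exE]) blast
  interpret maximal_barrier W E S
    using less.prems S by unfold_locales auto
  show ?case
  proof (rule perfect_matching_if_components_matchable)
    fix C u assume C: "C \<in> components (W - S) E" and u: "u \<in> C"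
    have "C - {u} \<subset> W" using components_subset[OF C] u by blast
    then have "card (C - {u}) < card W" by (rule psubset_card_mono[OF less.prems(1)])
    then show "\<exists>M. perfect_matching (C - {u}) (induced_edges (C - {u}) E) M"
      using less.hyps tutte_condition_component_Diff[OF C u] finite_subset less.prems(1)
        components_subset[OF C] by blast
  qed
qed

section \<open>Cubic 3-connected graphs\<close>

definition cut_edges :: "'a set set \<Rightarrow> 'a set \<Rightarrow> 'a set set" where
  "cut_edges F X = {e \<in> F. card (e \<inter> X) = 1}"

definition inner_edges :: "'a set set \<Rightarrow> 'a set \<Rightarrow> 'a set set" where
  "inner_edges F X = {e \<in> F. e \<subseteq> X}"

lemma cut_edgesI: "u \<in> X \<Longrightarrow> w \<notin> X \<Longrightarrow> {u, w} \<in> F \<Longrightarrow> {u, w} \<in> cut_edges F X"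
  unfolding cut_edges_def by (subgoal_tac "{u, w} \<inter> X = {u}") auto

lemma cut_edgesE:
  assumes "e \<in> cut_edges F X" "e = {a, b}" "a \<noteq> b"
  obtains "a \<in> X" "b \<notin> X" | "b \<in> X" "a \<notin> X"
  using assms unfolding cut_edges_def by (cases "a \<in> X"; cases "b \<in> X") (auto simp: Int_insert_left)

lemma card_filter_eq_sum: "finite F \<Longrightarrow> card {e \<in> F. P e} = (\<Sum>e\<in>F. if P e then 1 else 0)"
  by (simp add: sum.If_cases Int_def)

lemma sum_degree_eq:
  assumes F: "finite F" "\<forall>e\<in>F. card e = 2" and X: "finite X"
  shows "(\<Sum>u\<in>X. degree F u) = 2 * card (inner_edges F X) + card (cut_edges F X)"
proof -
  have card_Int: "card (e \<inter> X) = (if e \<subseteq> X then 2 else 0) + (if card (e \<inter> X) = 1 then 1 else 0)"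
    if "e \<in> F" for e
  proof (cases "e \<subseteq> X")
    case False
    have "finite e" "card e = 2" using F(2) that card.infinite by fastforce+
    moreover have "e \<inter> X \<subset> e" using False by blast
    ultimately have "card (e \<inter> X) < 2" using psubset_card_mono by metis
    then show ?thesis using False by auto
  qed (use F(2) that in \<open>simp add: Int_absorb2\<close>)
  have "(\<Sum>u\<in>X. degree F u) = (\<Sum>u\<in>X. \<Sum>e\<in>F. if u \<in> e then 1 else (0::nat))"
    unfolding degree_def using card_filter_eq_sum[OF F(1)] by simp
  also have "\<dots> = (\<Sum>e\<in>F. \<Sum>u\<in>X. if u \<in> e then 1 else (0::nat))" by (rule sum.swap)
  also have "\<dots> = (\<Sum>e\<in>F. card (e \<inter> X))"
  proof (rule sum.cong[OF refl])
    fix e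
    have "e \<inter> X = {u \<in> X. u \<in> e}" by blast
    then show "(\<Sum>u\<in>X. if u \<in> e then 1 else (0::nat)) = card (e \<inter> X)"
      using card_filter_eq_sum[OF X] by simp
  qed
  also have "\<dots> = (\<Sum>e\<in>F. (if e \<subseteq> X then 2 else 0) + (if card (e \<inter> X) = 1 then 1 else 0))"
    using card_Int by (rule sum.cong[OF refl])
  also have "\<dots> = 2 * card (inner_edges F X) + card (cut_edges F X)"
  proof -
    have "(\<Sum>e\<in>F. if e \<subseteq> X then 2 else 0) = 2 * (\<Sum>e\<in>F. if e \<subseteq> X then 1 else (0::nat))"
      by (subst sum_distrib_left) (rule sum.cong, auto)
    then show ?thesis
      unfolding sum.distrib inner_edges_def cut_edges_def card_filter_eq_sum[OF F(1)] by simp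
  qed
  finally show ?thesis .
qed

lemma graph_edgeE:
  assumes "graph V E" "e \<in> E"
  obtains a b where "e = {a, b}" "a \<noteq> b" "a \<in> V" "b \<in> V"
  using assms unfolding graph_def by blast

locale cubic_three_connected =
  fixes V :: "'a set" and E :: "'a set set"
  assumes cubic: "cubic V E" and three_connected: "three_connected V E"
begin

lemma graph: "graph V E"
  using cubic unfolding cubic_def by simp

lemma finite_V: "finite V"
  using graph unfolding graph_def by simp

lemma edge_subset: "e \<in> E \<Longrightarrow> e \<subseteq> V"
  by (metis graph graph_edgeE insert_subset empty_subsetI)

lemma finite_E: "finite E"
  using edge_subset finite_V by (meson Pow_iff finite_Pow_iff finite_subset subsetI)

lemma card_edge: "e \<in> E \<Longrightarrow> card e = 2"
  by (metis graph graph_edgeE card_2_iff)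

lemma degree_3: "u \<in> V \<Longrightarrow> degree E u = 3"
  using cubic unfolding cubic_def by simp

lemma edge_ends: "{a, b} \<in> E \<Longrightarrow> a \<noteq> b \<and> a \<in> V \<and> b \<in> V"
  by (metis graph graph_edgeE doubleton_eq_iff)

lemma edge_other_end:
  assumes "e \<in> E" "u \<in> e"
  obtains w where "e = {u, w}" "u \<noteq> w"
  using graph_edgeE[OF graph assms(1)] assms(2) by (metis insert_commute insertE singletonD)

lemma three_card_eq: "X \<subseteq> V \<Longrightarrow> 3 * card X = 2 * card (inner_edges E X) + card (cut_edges E X)"
  using sum_degree_eq[OF finite_E, of X] card_edge degree_3 finite_V
  by (simp add: finite_subset subset_iff)

lemma even_card_V: "even (card V)"
proof -
  have "cut_edges E V = {}" unfolding cut_edges_def using edge_subset card_edge by (auto simp: Int_absorb2)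
  then show ?thesis using three_card_eq[of V] by simp presburger
qed

lemma odd_card_cut_iff:
  assumes "X \<subseteq> V"
  shows "odd (card (cut_edges E X)) \<longleftrightarrow> odd (card X)"
  using three_card_eq[OF assms] by presburger

lemma reachable_in_Diff:
  "S \<subseteq> V \<Longrightarrow> card S \<le> 2 \<Longrightarrow> u \<in> V - S \<Longrightarrow> w \<in> V - S \<Longrightarrow> reachable_in (V - S) E u w"
  using three_connected unfolding three_connected_def connected_on_def reachable_in_def by blast

lemma cut_edges_nonempty:
  assumes X: "X \<subseteq> V" "X \<noteq> {}" "X \<noteq> V"
  shows "cut_edges E X \<noteq> {}"
proof
  assume cut: "cut_edges E X = {}"
  obtain a w where a: "a \<in> X" and w: "w \<in> V" "w \<notin> X" using X by blast
  have "edge_closed X V E"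
    unfolding edge_closed_def
  proof (intro ballI impI)
    fix u y assume "u \<in> X" "y \<in> V" "{u, y} \<in> E"
    then show "y \<in> X" using cut_edgesI[of u X y E] cut by blast
  qed
  moreover have "reachable_in V E a w" using reachable_in_Diff[of "{}" a w] a X(1) w by auto
  ultimately show False using reachable_in_edge_closed[OF _ X(1) a] w by blast
qed

text \<open>A single cut edge \<open>ab\<close> with \<open>b \<notin> X\<close> would make \<open>b\<close> a cut vertex, unless \<open>b\<close> is the only
  vertex outside \<open>X\<close>; then \<open>b\<close> has degree one.\<close>

lemma card_cut_edges_ne_1:
  assumes X: "X \<subseteq> V" "X \<noteq> {}" "X \<noteq> V"
  shows "card (cut_edges E X) \<noteq> 1"
proof
  assume "card (cut_edges E X) = 1"
  then obtain e0 where e0: "cut_edges E X = {e0}" by (rule card_1_singletonE)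
  then have e0E: "e0 \<in> E" unfolding cut_edges_def by auto
  obtain a b where ab: "e0 = {a, b}" "a \<in> X" "b \<notin> X"
  proof -
    obtain p q where pq: "e0 = {p, q}" "p \<noteq> q" by (rule graph_edgeE[OF graph e0E])
    have "e0 \<in> cut_edges E X" using e0 by simp
    then show ?thesis
    proof (rule cut_edgesE[OF _ pq])
      assume "p \<in> X" "q \<notin> X"
      then show ?thesis using that pq(1) by blast
    next
      assume "q \<in> X" "p \<notin> X"
      then show ?thesis using that[of q p] pq(1) by (simp add: insert_commute)
    qed
  qed
  have bV: "b \<in> V" using edge_subset[OF e0E] ab by auto
  have only_b: "y = b" if "u \<in> X" "y \<notin> X" "{u, y} \<in> E" for u y
  proof -
    have "{u, y} = {a, b}" using cut_edgesI[OF that] e0 ab(1) by simp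
    then show ?thesis using that ab by (auto simp: doubleton_eq_iff)
  qed
  show False
  proof (cases "V - X = {b}")
    case True
    have "{e \<in> E. b \<in> e} \<subseteq> {e0}"
    proof
      fix e assume e: "e \<in> {e \<in> E. b \<in> e}"
      then obtain y where y: "e = {b, y}" "b \<noteq> y" by (auto elim: edge_other_end)
      have "y \<in> V" using edge_subset e y(1) by blast
      have "y \<in> X"
      proof (rule ccontr)
        assume "y \<notin> X"
        then have "y \<in> V - X" using \<open>y \<in> V\<close> by blast
        then have "y = b" using True by simp
        then show False using y(2) by simp
      qed
      then have "{y, b} \<in> cut_edges E X" using cut_edgesI[of y X b E] e y(1) ab(3)
        by (simp add: insert_commute)
      then show "e \<in> {e0}" using e0 y(1) by (simp add: insert_commute)
    qed
    then have "degree E b \<le> card {e0}" unfolding degree_def by (intro card_mono) simp_all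
    then show False using degree_3[OF bV] by simp
  next
    case False
    then obtain w where w: "w \<in> V" "w \<notin> X" "w \<noteq> b" using bV ab(3) by blast
    have "edge_closed X (V - {b}) E" unfolding edge_closed_def using only_b by blast
    moreover have "reachable_in (V - {b}) E a w"
      using reachable_in_Diff[of "{b}" a w] bV ab(2,3) X(1) w by fastforce
    moreover have "X \<subseteq> V - {b}" using X(1) ab(3) by blast
    ultimately show False using reachable_in_edge_closed[OF _ _ ab(2)] w by blast
  qed
qed

lemma finite_cut_edges: "finite (cut_edges E X)"
  using finite_E unfolding cut_edges_def by simp

lemma card_cut_edges_ge:
  assumes "X \<subseteq> V" "X \<noteq> {}" "X \<noteq> V"
  shows "card (cut_edges E X) \<ge> (if odd (card X) then 3 else 2)"
proof -
  have "card (cut_edges E X) \<noteq> 0"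
    using cut_edges_nonempty[OF assms] card_0_eq[OF finite_cut_edges] by blast
  then show ?thesis using card_cut_edges_ne_1[OF assms] odd_card_cut_iff[OF assms(1)] by presburger
qed

lemma component_cut_edge:
  assumes T: "T \<subseteq> V" and K: "K \<in> components (V - T) E" and e: "e \<in> cut_edges E K"
  obtains a b where "e = {a, b}" "a \<in> K" "b \<in> T" "e \<in> cut_edges E T"
proof -
  have "e \<in> E" using e unfolding cut_edges_def by simp
  then obtain a b where "e = {a, b}" "a \<noteq> b" by (rule graph_edgeE[OF graph])
  then obtain a b where ab: "e = {a, b}" "a \<in> K" "b \<notin> K"
    using cut_edgesE[OF e] by (metis insert_commute)
  have "b \<in> V" using edge_subset \<open>e \<in> E\<close> ab by auto
  then have "b \<in> T"
    using components_edge_closed[OF K] ab \<open>e \<in> E\<close> unfolding edge_closed_def by blast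
  moreover have "a \<notin> T" using ab components_subset[OF K] by blast
  ultimately show ?thesis using that ab cut_edgesI[of b T a E] \<open>e \<in> E\<close> by (simp add: insert_commute)
qed

lemma component_cut_edges_disjoint:
  assumes T: "T \<subseteq> V" and K: "K \<in> components (V - T) E" "K' \<in> components (V - T) E"
    and e: "e \<in> cut_edges E K" "e \<in> cut_edges E K'"
  shows "K = K'"
proof -
  obtain a b where ab: "e = {a, b}" "a \<in> K" "b \<in> T" by (rule component_cut_edge[OF T K(1) e(1)])
  obtain a' b' where ab': "e = {a', b'}" "a' \<in> K'" "b' \<in> T" by (rule component_cut_edge[OF T K(2) e(2)])
  have "a \<notin> T" "a' \<notin> T" using components_subset K ab ab' by blast+
  then have "a = a'" using ab ab' by (metis doubleton_eq_iff)
  then show ?thesis using components_eq[OF K] ab ab' by simp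
qed

definition tight_set :: "'a set \<Rightarrow> bool" where
  "tight_set T \<longleftrightarrow> T \<subseteq> V \<and> inner_edges E T = {} \<and>
     (\<forall>K\<in>components (V - T) E. odd (card K)) \<and> card (components (V - T) E) = card T"

text \<open>Counting the edges leaving \<open>T\<close>: every component sends at least three (odd) or two (even)
  edges into \<open>T\<close>, while \<open>T\<close> has at most \<open>3|T|\<close> leaving edges.\<close>

lemma tight_set_if_barrier:
  assumes T: "T \<subseteq> V" "T \<noteq> {}" and barrier: "card T \<le> odd_components (V - T) E"
  shows "tight_set T"
proof -
  let ?A = "components (V - T) E"
  let ?Odd = "{K \<in> ?A. odd (card K)}" and ?Even = "{K \<in> ?A. even (card K)}"
  have finA: "finite ?A" using finite_V by (simp add: finite_components)
  have "(\<Sum>K\<in>?A. if odd (card K) then 3 else 2) \<le> (\<Sum>K\<in>?A. card (cut_edges E K))"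
  proof (rule sum_mono)
    fix K assume K: "K \<in> ?A"
    have "K \<subseteq> V - T" "K \<noteq> {}" using components_subset[OF K] components_nonempty[OF K] .
    then have "K \<subseteq> V" "K \<noteq> {}" "K \<noteq> V" using T by auto
    then show "(if odd (card K) then 3 else 2) \<le> card (cut_edges E K)" by (rule card_cut_edges_ge)
  qed
  also have "\<dots> = card (\<Union>K\<in>?A. cut_edges E K)"
    using finA finite_E component_cut_edges_disjoint[OF T(1)] unfolding cut_edges_def
    by (intro card_UN_disjoint[symmetric]) auto
  also have "\<dots> \<le> card (cut_edges E T)"
    using component_cut_edge[OF T(1)] by (intro card_mono[OF finite_cut_edges]) blast
  finally have "3 * card ?Odd + 2 * card ?Even + 2 * card (inner_edges E T) \<le> 3 * card T"
    using three_card_eq[OF T(1)] finA by (simp add: sum.If_cases Int_def Collect_neg_eq[symmetric])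
  moreover have "card T \<le> card ?Odd" using barrier unfolding odd_components_def .
  ultimately have "card (inner_edges E T) = 0" "card ?Even = 0" "card ?Odd = card T" by linarith+
  moreover have "finite (inner_edges E T)" "finite ?Even"
    using finite_E finA unfolding inner_edges_def by simp_all
  ultimately have "inner_edges E T = {}" "?Even = {}" "card ?Odd = card T" by simp_all
  moreover from this have "?Odd = ?A" by blast
  ultimately show ?thesis unfolding tight_set_def using T by auto
qed

lemma odd_components_parity_gap:
  assumes Z: "Z \<subseteq> V" "even (card Z)" and S: "S \<subseteq> V - Z"
    and gt: "card S < odd_components (V - Z - S) E"
  shows "card S + 2 \<le> odd_components (V - Z - S) E"
proof -
  have finZ: "finite Z" and finS: "finite S" using Z S finite_V finite_subset by blast+
  have "card (V - Z) = card V - card Z" "card (V - Z - S) = card (V - Z) - card S"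
    using card_Diff_subset[OF finZ Z(1)] card_Diff_subset[OF finS S] by simp_all
  moreover have "card Z \<le> card V" "card S \<le> card (V - Z)"
    using card_mono[OF finite_V Z(1)] card_mono[OF _ S] finite_V by simp_all
  ultimately have "card (V - Z - S) + card S + card Z = card V" by linarith
  moreover have "even (odd_components (V - Z - S) E) \<longleftrightarrow> even (card (V - Z - S))"
    using odd_components_parity[of "V - Z - S" E] finite_V by simp
  ultimately have "even (odd_components (V - Z - S) E) \<longleftrightarrow> even (card S)"
    using even_card_V Z(2) by presburger
  then show ?thesis using gt by presburger
qed

lemma edge_in_perfect_matching:
  assumes e: "{a, b} \<in> E"
  shows "\<exists>M. perfect_matching V E M \<and> {a, b} \<in> M"
proof -
  have ab: "a \<noteq> b" "a \<in> V" "b \<in> V" using edge_ends[OF e] by auto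
  let ?W = "V - {a, b}"
  have "tutte_condition ?W E"
    unfolding tutte_condition_def
  proof (intro allI impI; rule ccontr)
    fix S assume S: "S \<subseteq> ?W" and gt: "\<not> odd_components (?W - S) E \<le> card S"
    let ?T = "insert a (insert b S)"
    have "{a, b} \<subseteq> V" "even (card {a, b})" using ab by auto
    then have "card S + 2 \<le> odd_components (?W - S) E"
      using odd_components_parity_gap[OF _ _ S] gt by simp
    moreover have "?W - S = V - ?T" by blast
    moreover have "card ?T = card S + 2"
    proof -
      have "finite S" using S finite_V by (meson Diff_subset finite_subset subset_trans)
      moreover have "a \<notin> S" "b \<notin> S" using S by auto
      ultimately show ?thesis using ab(1) by simp
    qed
    ultimately have "card ?T \<le> odd_components (V - ?T) E" by simp
    moreover have "?T \<subseteq> V" "?T \<noteq> {}" using S ab by auto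
    ultimately have "tight_set ?T" using tight_set_if_barrier by blast
    moreover have "{a, b} \<in> inner_edges E ?T" unfolding inner_edges_def using e by simp
    ultimately show False unfolding tight_set_def by blast
  qed
  then obtain M0 where "perfect_matching ?W (induced_edges ?W E) M0"
    using tutte_perfect_matching[of ?W E] finite_V by blast
  from perfect_matching_insert_edge[OF this e]
  have "perfect_matching (insert a (insert b ?W)) (induced_edges (insert a (insert b ?W)) E)
      (insert {a, b} M0)" by simp
  moreover have "insert a (insert b ?W) = V" using ab by blast
  moreover have "induced_edges V E = E" using edge_subset by (rule induced_edges_eq)
  ultimately show ?thesis by (intro exI[of _ "insert {a, b} M0"]) simp
qed

lemma perfect_matching_subset: "perfect_matching V E M \<Longrightarrow> M \<subseteq> E"
  unfolding perfect_matching_def by simp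

lemma card_perfect_matching_eq:
  assumes pm: "perfect_matching V E M" and X: "X \<subseteq> V"
  shows "card X = 2 * card (inner_edges M X) + card (cut_edges M X)"
proof -
  have "degree M u = 1" if u: "u \<in> V" for u
  proof -
    obtain e where e: "e \<in> M" "u \<in> e" using perfect_matching_covers[OF pm u] by blast
    then have "{e \<in> M. u \<in> e} = {e}" using perfect_matching_unique[OF pm u] by blast
    then show ?thesis unfolding degree_def by simp
  qed
  then show ?thesis
    using sum_degree_eq[of M X] perfect_matching_subset[OF pm] finite_E card_edge X finite_V
    by (simp add: finite_subset subset_iff)
qed

text \<open>Every vertex of \<open>T\<close> is matched into a different component, and every (odd) component
  needs an odd number of matching edges leaving it.\<close>

lemma tight_set_matching_cut:
  assumes tight: "tight_set T" and pm: "perfect_matching V E M"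
    and K: "K \<in> components (V - T) E"
  shows "card (cut_edges M K) = 1"
proof -
  let ?A = "components (V - T) E"
  have T: "T \<subseteq> V" using tight unfolding tight_set_def by simp
  have finA: "finite ?A" using finite_V by (simp add: finite_components)
  have ME: "M \<subseteq> E" by (rule perfect_matching_subset[OF pm])
  have finM: "finite M" using ME finite_E finite_subset by blast
  have ge1: "card (cut_edges M K') \<ge> 1" if "K' \<in> ?A" for K'
  proof -
    have "odd (card K')" "K' \<subseteq> V" using tight components_subset[OF that] that
      unfolding tight_set_def by auto
    then have "odd (card (cut_edges M K'))" using card_perfect_matching_eq[OF pm \<open>K' \<subseteq> V\<close>]
      by presburger
    then show ?thesis by (cases "card (cut_edges M K')") auto
  qed
  have cut_sub: "cut_edges M K' \<subseteq> cut_edges E K'" for K' using ME unfolding cut_edges_def by blast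
  have finite_cut: "finite (cut_edges M X)" for X using finM unfolding cut_edges_def by simp
  have "(\<Sum>K\<in>?A. card (cut_edges M K)) = card (\<Union>K\<in>?A. cut_edges M K)"
  proof (rule card_UN_disjoint[symmetric, OF finA])
    show "\<forall>K\<in>?A. \<forall>K'\<in>?A. K \<noteq> K' \<longrightarrow> cut_edges M K \<inter> cut_edges M K' = {}"
      using component_cut_edges_disjoint[OF T] cut_sub by blast
  qed (simp add: finite_cut)
  also have "\<dots> \<le> card (cut_edges M T)"
  proof (rule card_mono[OF finite_cut], safe)
    fix K e assume "K \<in> ?A" "e \<in> cut_edges M K"
    then obtain a b where "e = {a, b}" "a \<in> K" "b \<in> T"
      using component_cut_edge[OF T] cut_sub by blast
    then show "e \<in> cut_edges M T"
      using \<open>e \<in> cut_edges M K\<close> cut_edgesI[of b T a M] components_subset[OF \<open>K \<in> ?A\<close>]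
      unfolding cut_edges_def by (auto simp: insert_commute)
  qed
  also have "\<dots> = card ?A"
  proof -
    have "inner_edges M T = {}" using tight ME unfolding tight_set_def inner_edges_def by blast
    then show ?thesis using card_perfect_matching_eq[OF pm T] tight unfolding tight_set_def by simp
  qed
  finally have le: "(\<Sum>K\<in>?A. card (cut_edges M K)) \<le> (\<Sum>K\<in>?A. 1)" by simp
  show ?thesis
  proof (rule ccontr)
    assume "card (cut_edges M K) \<noteq> 1"
    then have "1 < card (cut_edges M K)" using ge1[OF K] by simp
    then have "(\<Sum>K\<in>?A. 1) < (\<Sum>K\<in>?A. card (cut_edges M K))"
      using sum_strict_mono_ex1[OF finA, of "\<lambda>_. 1" "\<lambda>K. card (cut_edges M K)"] ge1 K by blast
    then show False using le by simp
  qed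
qed

lemma tight_set_component_Diff_matchable:
  assumes tight: "tight_set T" and K: "K \<in> components (V - T) E"
    and u: "u \<in> K" and t: "t \<in> T" and ut: "{u, t} \<in> E"
  shows "\<exists>P. perfect_matching (K - {u}) (induced_edges (K - {u}) E) P"
proof -
  obtain M where pm: "perfect_matching V E M" and utM: "{u, t} \<in> M"
    using edge_in_perfect_matching[OF ut] by blast
  have KT: "K \<subseteq> V - T" using components_subset[OF K] .
  have "t \<notin> K" using t KT by blast
  then have "{u, t} \<in> cut_edges M K" using cut_edgesI[OF u _ utM] by blast
  moreover obtain c where "cut_edges M K = {c}"
    using tight_set_matching_cut[OF tight pm K] by (rule card_1_singletonE)
  ultimately have cut: "cut_edges M K = {{u, t}}" by simp
  have "perfect_matching (K - {u}) (induced_edges (K - {u}) E) {e \<in> M. e \<subseteq> K - {u}}"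
  proof (rule perfect_matching_restrict[OF pm])
    show "K - {u} \<subseteq> V" using KT by blast
    fix e assume e: "e \<in> M" "e \<inter> (K - {u}) \<noteq> {}"
    then obtain w where w: "w \<in> K - {u}" "w \<in> e" by blast
    obtain y where y: "e = {w, y}" using edge_other_end perfect_matching_subset[OF pm] e w by blast
    have uV: "u \<in> V" using u KT by blast
    have "e \<noteq> {u, t}" using w y t KT by (auto simp: doubleton_eq_iff)
    then have "y \<in> K" using cut_edgesI[of w K y M] cut e w y by auto
    moreover have "y \<noteq> u" using perfect_matching_unique[OF pm uV e(1) _ utM] \<open>e \<noteq> {u, t}\<close> y by auto
    ultimately show "e \<subseteq> K - {u}" using w y by auto
  qed
  then show ?thesis by blast
qed

end

section \<open>A second perfect matching through a spoke\<close>

lemma periodic_point_exists: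
  assumes fin: "finite D" and p0: "p0 \<in> D" and closed: "\<And>s. s \<in> D \<Longrightarrow> f s \<in> D"
  shows "\<exists>p\<in>D. \<exists>k>0. (f ^^ k) p = p"
proof -
  have iter: "(f ^^ i) p0 \<in> D" for i by (induction i) (auto simp: p0 closed)
  have "\<not> inj_on (\<lambda>i. (f ^^ i) p0) {0..card D}"
  proof
    assume inj: "inj_on (\<lambda>i. (f ^^ i) p0) {0..card D}"
    have "(\<lambda>i. (f ^^ i) p0) ` {0..card D} \<subseteq> D" using iter by blast
    then have "card ((\<lambda>i. (f ^^ i) p0) ` {0..card D}) \<le> card D" using fin by (simp add: card_mono)
    then show False using card_image[OF inj] by simp
  qed
  then obtain i j where "i < j" "(f ^^ i) p0 = (f ^^ j) p0"
    unfolding inj_on_def by (metis nat_neq_iff)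
  moreover have "(f ^^ j) p0 = (f ^^ (j - i)) ((f ^^ i) p0)"
  proof -
    have "j = (j - i) + i" using \<open>i < j\<close> by simp
    then show ?thesis by (metis funpow_add comp_apply)
  qed
  ultimately show ?thesis using iter by (metis zero_less_diff)
qed

lemma invariant_cycle_exists:
  assumes fin: "finite D" and "D \<noteq> {}" and closed: "\<And>s. s \<in> D \<Longrightarrow> f s \<in> D"
  obtains C where "C \<subseteq> D" "C \<noteq> {}" "f ` C = C" "inj_on f C"
proof -
  obtain p0 where p0: "p0 \<in> D" using \<open>D \<noteq> {}\<close> by blast
  have "\<exists>p\<in>D. \<exists>k>0. (f ^^ k) p = p" by (rule periodic_point_exists[OF fin p0]) (rule closed)
  then obtain p k where p: "p \<in> D" "k > 0" "(f ^^ k) p = p" by blast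
  define C where "C = range (\<lambda>i. (f ^^ i) p)"
  have "(f ^^ i) p \<in> D" for i by (induction i) (auto simp: p closed)
  then have CD: "C \<subseteq> D" unfolding C_def by blast
  have "f ` C \<subseteq> C"
  proof
    fix y assume "y \<in> f ` C"
    then obtain i where "y = f ((f ^^ i) p)" unfolding C_def by blast
    then have "y = (f ^^ Suc i) p" by simp
    then show "y \<in> C" unfolding C_def by blast
  qed
  moreover have "C \<subseteq> f ` C"
  proof
    fix y assume "y \<in> C"
    then obtain i where i: "y = (f ^^ i) p" unfolding C_def by blast
    obtain m where "k = Suc m" using p(2) gr0_conv_Suc by blast
    have "y = (f ^^ (i + k)) p" using i p(3) by (simp add: funpow_add)
    also have "\<dots> = f ((f ^^ (i + m)) p)" using \<open>k = Suc m\<close> by simp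
    finally show "y \<in> f ` C" unfolding C_def by blast
  qed
  ultimately have fC: "f ` C = C" by blast
  moreover have "finite C" using CD fin finite_subset by blast
  ultimately have "inj_on f C" by (intro eq_card_imp_inj_on) simp_all
  moreover have "C \<noteq> {}" unfolding C_def by blast
  ultimately show ?thesis using that[OF CD] fC by blast
qed

context cubic_three_connected
begin

lemma neighbours_iff: "y \<in> neighbours E v \<longleftrightarrow> {v, y} \<in> E"
  unfolding neighbours_def by simp

lemma edges_at: "{e \<in> E. v \<in> e} = (\<lambda>y. {v, y}) ` neighbours E v"
  using edge_other_end neighbours_iff by blast

lemma card_neighbours: "v \<in> V \<Longrightarrow> card (neighbours E v) = 3"
proof -
  assume "v \<in> V"
  have "inj_on (\<lambda>y. {v, y}) (neighbours E v)" by (rule inj_onI) (auto simp: doubleton_eq_iff)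
  then show ?thesis using degree_3[OF \<open>v \<in> V\<close>] edges_at card_image unfolding degree_def by metis
qed

lemma neighbours_subset: "neighbours E v \<subseteq> V - {v}"
  using edge_ends neighbours_iff by blast

lemma finite_neighbours: "finite (neighbours E v)"
  using neighbours_subset finite_V finite_subset by blast

lemma vjoin_if_matching_outside_neighbourhood:
  assumes v: "v \<in> V"
    and P: "perfect_matching (V - insert v (neighbours E v))
      (induced_edges (V - insert v (neighbours E v)) E) P"
  shows "vjoin V E v (P \<union> (\<lambda>y. {v, y}) ` neighbours E v)"
proof -
  let ?N = "neighbours E v" and ?W = "V - insert v (neighbours E v)"
  let ?J = "P \<union> (\<lambda>y. {v, y}) ` ?N"
  have P_sub: "e \<in> E" "e \<subseteq> ?W" if "e \<in> P" for e
    using perfect_matching_induced_edgesD[OF P that] by simp_all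
  have spoke: "\<exists>y\<in>?N. e = {v, y}" if "e \<in> ?J" "e \<notin> P" for e
    using that by blast
  have JE: "?J \<subseteq> E" using P_sub neighbours_iff by blast
  have "{e \<in> ?J. v \<in> e} = {e \<in> E. v \<in> e}"
  proof
    show "{e \<in> ?J. v \<in> e} \<subseteq> {e \<in> E. v \<in> e}" using JE by blast
    show "{e \<in> E. v \<in> e} \<subseteq> {e \<in> ?J. v \<in> e}" unfolding edges_at by blast
  qed
  then have deg_v: "degree ?J v = 3" using degree_3[OF v] unfolding degree_def by simp
  have unique: "\<exists>!e. e \<in> ?J \<and> u \<in> e" if u: "u \<in> V - {v}" for u
  proof (cases "u \<in> ?N")
    case True
    show ?thesis
    proof (rule ex1I[of _ "{v, u}"])
      fix e assume e: "e \<in> ?J \<and> u \<in> e"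
      have "e \<notin> P" using P_sub(2) e True by blast
      then obtain y where "e = {v, y}" using spoke e by blast
      then show "e = {v, u}" using e u by auto
    qed (use True in blast)
  next
    case False
    then have "u \<in> ?W" using u by blast
    then obtain e where e: "e \<in> P" "u \<in> e" using perfect_matching_covers[OF P] by blast
    show ?thesis
    proof (rule ex1I[of _ e])
      fix e' assume e': "e' \<in> ?J \<and> u \<in> e'"
      show "e' = e"
      proof (cases "e' \<in> P")
        case True
        then show ?thesis using perfect_matching_unique[OF P \<open>u \<in> ?W\<close> _ _ e] e' by blast
      next
        case False
        then obtain y where "y \<in> ?N" "e' = {v, y}" using spoke e' by blast
        then show ?thesis using e' u \<open>u \<notin> ?N\<close> by auto
      qed
    qed (use e in blast)
  qed
  have "degree ?J u = 1" if "u \<in> V - {v}" for u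
    using unique[OF that] by (simp only: degree_eq_1_iff)
  then show ?thesis using JE deg_v unfolding vjoin_def by blast
qed

end

locale spoke_barrier = cubic_three_connected +
  fixes T :: "'a set" and v x :: 'a and M :: "'a set set"
  assumes tight: "tight_set T"
    and v_component: "{v} \<in> components (V - T) E"
    and x_in_T: "x \<in> T" and pm: "perfect_matching V E M" and vx_in_M: "{v, x} \<in> M"
begin

lemma T_subset: "T \<subseteq> V"
  using tight unfolding tight_set_def by blast

lemma T_independent: "t \<in> T \<Longrightarrow> {t, y} \<in> E \<Longrightarrow> y \<notin> T"
  using tight unfolding tight_set_def inner_edges_def by blast

lemma v_notin_T: "v \<notin> T"
  using components_subset[OF v_component] by blast

lemma matching_subset: "M \<subseteq> E"
  using perfect_matching_subset[OF pm] .

lemma matching_cut_eq: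
  assumes K: "K \<in> components (V - T) E" and "t \<in> T" "y \<in> K" "{t, y} \<in> M"
  shows "cut_edges M K = {{t, y}}"
proof -
  have "t \<notin> K" using components_subset[OF K] \<open>t \<in> T\<close> by blast
  then have "{y, t} \<in> cut_edges M K" using cut_edgesI[of y K t M] assms(3,4) by (simp add: insert_commute)
  moreover obtain c where "cut_edges M K = {c}"
    using tight_set_matching_cut[OF tight pm K] by (rule card_1_singletonE)
  ultimately show ?thesis by (simp add: insert_commute)
qed

lemma matching_cut_exists:
  assumes K: "K \<in> components (V - T) E"
  shows "\<exists>t\<in>T. \<exists>y\<in>K. {t, y} \<in> M"
proof -
  obtain c where c: "cut_edges M K = {c}"
    using tight_set_matching_cut[OF tight pm K] by (rule card_1_singletonE)
  then have "c \<in> cut_edges E K" "c \<in> M" using matching_subset unfolding cut_edges_def by auto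
  then obtain a b where "c = {a, b}" "a \<in> K" "b \<in> T"
    using component_cut_edge[OF T_subset K] by blast
  moreover have "{b, a} \<in> M" using \<open>c \<in> M\<close> \<open>c = {a, b}\<close> by (simp add: insert_commute)
  ultimately show ?thesis by blast
qed

lemma exit_edge_exists:
  assumes s: "s \<in> T"
  shows "\<exists>w. {s, w} \<in> E \<and> {s, w} \<notin> M \<and> w \<notin> T \<and> w \<noteq> v"
proof -
  have sV: "s \<in> V" using s T_subset by blast
  obtain m where m: "m \<in> M" "s \<in> m" using perfect_matching_covers[OF pm sV] by blast
  let ?Es = "{e \<in> E. s \<in> e}"
  have "card ?Es - card {m, {s, v}} \<le> card (?Es - {m, {s, v}})" by (rule diff_card_le_card_Diff) simp
  moreover have "card {m, {s, v}} \<le> 2" by (simp add: card_insert_le_m1)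
  moreover have "card ?Es = 3" using degree_3[OF sV] unfolding degree_def .
  ultimately have "card (?Es - {m, {s, v}}) > 0" by linarith
  then have "?Es - {m, {s, v}} \<noteq> {}" by (metis card.empty less_irrefl)
  then obtain e where e: "e \<in> E" "s \<in> e" "e \<noteq> m" "e \<noteq> {s, v}" by blast
  then obtain w where w: "e = {s, w}" by (auto elim: edge_other_end)
  have "w \<notin> T" using T_independent[OF s] e(1) w by simp
  moreover have "e \<notin> M" using perfect_matching_unique[OF pm sV m] e by blast
  ultimately show ?thesis using e w by blast
qed

text \<open>For \<open>s \<in> T\<close>, the exit edge leaves \<open>s\<close> outside \<open>M\<close> into a component other than \<open>{v}\<close>; the
  successor of \<open>s\<close> is the vertex of \<open>T\<close> matched into that component.\<close>

definition exit_vertex :: "'a \<Rightarrow> 'a" where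
  "exit_vertex s = (SOME w. {s, w} \<in> E \<and> {s, w} \<notin> M \<and> w \<notin> T \<and> w \<noteq> v)"

definition exit_component :: "'a \<Rightarrow> 'a set" where
  "exit_component s = component (V - T) E (exit_vertex s)"

definition successor :: "'a \<Rightarrow> 'a" where
  "successor s = (SOME t. t \<in> T \<and> (\<exists>y\<in>exit_component s. {t, y} \<in> M))"

lemma exit_vertex:
  "s \<in> T \<Longrightarrow> {s, exit_vertex s} \<in> E \<and> {s, exit_vertex s} \<notin> M \<and> exit_vertex s \<notin> T \<and> exit_vertex s \<noteq> v"
  unfolding exit_vertex_def by (rule someI_ex) (rule exit_edge_exists)

lemma exit_component: "s \<in> T \<Longrightarrow> exit_component s \<in> components (V - T) E"
  unfolding exit_component_def using exit_vertex edge_subset by (intro componentsI) blast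

lemma exit_vertex_in_component: "exit_vertex s \<in> exit_component s"
  unfolding exit_component_def by (rule component_self)

lemma exit_component_subset: "s \<in> T \<Longrightarrow> exit_component s \<subseteq> V - T"
  using components_subset[OF exit_component] .

lemma v_notin_exit_component: "s \<in> T \<Longrightarrow> v \<notin> exit_component s"
proof
  assume s: "s \<in> T" and "v \<in> exit_component s"
  then have "exit_component s = {v}" using components_eq[OF exit_component[OF s] v_component] by simp
  then show False using exit_vertex_in_component[of s] exit_vertex[OF s] by simp
qed

lemma successor: "s \<in> T \<Longrightarrow> successor s \<in> T \<and> (\<exists>y\<in>exit_component s. {successor s, y} \<in> M)"
  unfolding successor_def by (rule someI_ex) (use matching_cut_exists[OF exit_component] in blast)

lemma successor_ne_x:
  assumes s: "s \<in> T"
  shows "successor s \<noteq> x"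
proof
  assume succ: "successor s = x"
  obtain y where y: "y \<in> exit_component s" "{x, y} \<in> M" using successor[OF s] succ by blast
  have "x \<in> V" using x_in_T T_subset by blast
  then have "{x, y} = {v, x}" using perfect_matching_unique[OF pm _ y(2) _ vx_in_M] by simp
  moreover have "y \<noteq> x" using y(1) exit_component_subset[OF s] x_in_T by blast
  ultimately have "y = v" by (auto simp: doubleton_eq_iff)
  then show False using v_notin_exit_component[OF s] y(1) by simp
qed

context
  fixes C :: "'a set"
  assumes C_subset: "C \<subseteq> T - {x}" and successor_C: "successor ` C = C"
    and inj_successor: "inj_on successor C"
begin

lemma C_T: "s \<in> C \<Longrightarrow> s \<in> T"
  using C_subset by blast

lemma exit_component_inj:
  assumes s: "s \<in> C" "s' \<in> C" and eq: "exit_component s = exit_component s'"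
  shows "s = s'"
proof -
  obtain y where y: "y \<in> exit_component s" "{successor s, y} \<in> M" using successor[OF C_T[OF s(1)]] by blast
  obtain y' where y': "y' \<in> exit_component s" "{successor s', y'} \<in> M"
    using successor[OF C_T[OF s(2)]] eq by auto
  have "{{successor s, y}} = {{successor s', y'}}"
    using matching_cut_eq[OF exit_component[OF C_T[OF s(1)]]] y y' successor C_T s by metis
  moreover have "y \<notin> T" using y(1) exit_component_subset[OF C_T[OF s(1)]] by blast
  ultimately have "successor s = successor s'" using successor C_T s by (auto simp: doubleton_eq_iff)
  then show ?thesis using inj_onD[OF inj_successor _ s] by blast
qed

lemma matching_edge_in_cycle_region:
  assumes e: "e \<in> M" "w \<in> e" and s: "s \<in> C" and w: "w \<in> insert s (exit_component s)"
  shows "e \<subseteq> (\<Union>s\<in>C. insert s (exit_component s))"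
proof -
  have sT: "s \<in> T" using C_T[OF s] .
  obtain y where y: "e = {w, y}" using edge_other_end[of e w] e matching_subset by blast
  show ?thesis
  proof (cases "w = s")
    case True
    obtain s' where s': "s' \<in> C" "s = successor s'" using s successor_C by blast
    obtain y' where y': "y' \<in> exit_component s'" "{s, y'} \<in> M"
      using successor[OF C_T[OF s'(1)]] s'(2) by blast
    have "s \<in> V" using sT T_subset by blast
    then have "e = {s, y'}" using perfect_matching_unique[OF pm _ e(1) _ y'(2)] True e(2) by simp
    then show ?thesis using s s' y' by blast
  next
    case False
    let ?K = "exit_component s"
    have wK: "w \<in> ?K" using w False by simp
    show ?thesis
    proof (cases "y \<in> ?K")
      case True
      then show ?thesis using wK y s by blast
    next
      case False
      obtain y' where y': "y' \<in> ?K" "{successor s, y'} \<in> M" using successor[OF sT] by blast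
      have "e \<in> cut_edges M ?K" using cut_edgesI[OF wK False] e(1) y by simp
      then have "e = {successor s, y'}"
        using matching_cut_eq[OF exit_component[OF sT] _ y'] successor[OF sT] by simp
      moreover have "w \<noteq> successor s" using wK exit_component_subset[OF sT] successor[OF sT] by blast
      ultimately have "y = successor s" using y by (auto simp: doubleton_eq_iff)
      moreover have "successor s \<in> C" using s successor_C by blast
      ultimately show ?thesis using wK y s by blast
    qed
  qed
qed

text \<open>Switching along the cycle: each \<open>s \<in> C\<close> is matched to its exit vertex, the rest of its exit
  component is rematched internally, and \<open>M\<close> is kept everywhere else.\<close>

lemma alternating_cycle_matching:
  assumes p: "p \<in> C"
  shows "\<exists>M'. perfect_matching V E M' \<and> {v, x} \<in> M' \<and> M' \<noteq> M"
proof -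
  let ?w = exit_vertex and ?K = exit_component
  define X where "X s = insert s (?K s)" for s
  define U where "U = (\<Union>s\<in>C. X s)"
  have w: "{s, ?w s} \<in> E" "?w s \<notin> T" "{s, ?w s} \<notin> M" if "s \<in> C" for s
    using exit_vertex[OF C_T[OF that]] by simp_all
  have "\<forall>s\<in>C. \<exists>P. perfect_matching (?K s - {?w s}) (induced_edges (?K s - {?w s}) E) P"
  proof
    fix s assume s: "s \<in> C"
    have "{?w s, s} \<in> E" using w(1)[OF s] by (simp add: insert_commute)
    then show "\<exists>P. perfect_matching (?K s - {?w s}) (induced_edges (?K s - {?w s}) E) P"
      by (rule tight_set_component_Diff_matchable[OF tight exit_component[OF C_T[OF s]]
            exit_vertex_in_component C_T[OF s]])
  qed
  from bchoice[OF this] obtain P where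
    P: "\<forall>s\<in>C. perfect_matching (?K s - {?w s}) (induced_edges (?K s - {?w s}) E) (P s)" by blast
  have piece: "perfect_matching (X s) (induced_edges (X s) E) (insert {s, ?w s} (P s))"
    if s: "s \<in> C" for s
  proof -
    have "s \<notin> ?K s - {?w s}" using exit_component_subset[OF C_T[OF s]] C_T[OF s] by blast
    moreover have "insert s (insert (?w s) (?K s - {?w s})) = X s"
      unfolding X_def using exit_vertex_in_component[of s] by blast
    ultimately show ?thesis
      using perfect_matching_insert_edge[OF P[rule_format, OF s] w(1)[OF s]] by simp
  qed
  have disjoint: "X s \<inter> X s' = {}" if "s \<in> C" "s' \<in> C" "s \<noteq> s'" for s s'
  proof -
    have "?K s \<inter> ?K s' = {}"
      using components_eq[OF exit_component[OF C_T[OF that(1)]] exit_component[OF C_T[OF that(2)]]]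
        exit_component_inj[OF that(1,2)] that(3) by blast
    moreover have "s \<notin> ?K s'" "s' \<notin> ?K s"
      using exit_component_subset C_T that(1,2) by blast+
    ultimately show ?thesis unfolding X_def using that(3) by blast
  qed
  let ?Q = "\<Union>s\<in>C. insert {s, ?w s} (P s)"
  have U_match: "perfect_matching U (induced_edges U E) ?Q"
    unfolding U_def
  proof (rule perfect_matching_UN)
    show "\<And>s. s \<in> C \<Longrightarrow> perfect_matching (X s) (induced_edges (X s) E) (insert {s, ?w s} (P s))"
      by (rule piece)
    show "\<And>s s'. s \<in> C \<Longrightarrow> s' \<in> C \<Longrightarrow> s \<noteq> s' \<Longrightarrow> X s \<inter> X s' = {}"
      by (rule disjoint)
  qed
  have UV: "U \<subseteq> V" unfolding U_def X_def using exit_component_subset C_T T_subset by blast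
  have rest: "perfect_matching (V - U) (induced_edges (V - U) E) {e \<in> M. e \<subseteq> V - U}"
  proof (rule perfect_matching_restrict[OF pm])
    fix e assume e: "e \<in> M" "e \<inter> (V - U) \<noteq> {}"
    have "e \<inter> U = {}"
    proof (rule ccontr)
      assume "e \<inter> U \<noteq> {}"
      then obtain s w where "s \<in> C" "w \<in> e" "w \<in> X s" unfolding U_def by blast
      then have "e \<subseteq> U"
        using matching_edge_in_cycle_region[OF e(1)] unfolding U_def X_def by blast
      then show False using e(2) by blast
    qed
    moreover have "e \<subseteq> V" using e(1) matching_subset edge_subset by blast
    ultimately show "e \<subseteq> V - U" by blast
  qed simp
  have "perfect_matching (U \<union> (V - U)) (induced_edges (U \<union> (V - U)) E) (?Q \<union> {e \<in> M. e \<subseteq> V - U})"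
    by (rule perfect_matching_Un[OF U_match rest]) blast
  moreover have "U \<union> (V - U) = V" using UV by blast
  moreover have "induced_edges V E = E" using edge_subset by (rule induced_edges_eq)
  ultimately have new: "perfect_matching V E (?Q \<union> {e \<in> M. e \<subseteq> V - U})" by simp
  have "v \<notin> X s" "x \<notin> X s" if "s \<in> C" for s
    using v_notin_T v_notin_exit_component[OF C_T[OF that]] x_in_T C_subset that
      exit_component_subset[OF C_T[OF that]] unfolding X_def by auto
  moreover have "v \<in> V" "x \<in> V" using v_component components_subset x_in_T T_subset by blast+
  ultimately have "{v, x} \<subseteq> V - U" unfolding U_def by blast
  then have "{v, x} \<in> ?Q \<union> {e \<in> M. e \<subseteq> V - U}" using vx_in_M by blast
  moreover have "{p, ?w p} \<in> ?Q" using p by blast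
  ultimately show ?thesis using new w(3)[OF p] by blast
qed

end

lemma two_perfect_matchings:
  assumes "T - {x} \<noteq> {}"
  shows "\<exists>M'. perfect_matching V E M' \<and> {v, x} \<in> M' \<and> M' \<noteq> M"
proof -
  have fin: "finite (T - {x})" using T_subset finite_V finite_subset by blast
  have closed: "successor s \<in> T - {x}" if "s \<in> T - {x}" for s
    using successor successor_ne_x that by blast
  obtain C where C: "C \<subseteq> T - {x}" "C \<noteq> {}" "successor ` C = C" "inj_on successor C"
    using invariant_cycle_exists[of "T - {x}" successor, OF fin assms closed] by blast
  then obtain p where "p \<in> C" by blast
  then show ?thesis using alternating_cycle_matching[OF C(1,3,4)] by blast
qed

end

context cubic_three_connected
begin

text \<open>Without a \<open>v\<close>-join, Tutte's condition fails on \<open>G - N[v]\<close>; the barrier found there, together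
  with \<open>N(v)\<close>, is a tight set in which \<open>{v}\<close> is one of the odd components.\<close>

lemma two_perfect_matchings_if_no_vjoin:
  assumes v: "v \<in> V" and x: "x \<in> neighbours E v" and no_join: "\<nexists>J. vjoin V E v J"
  shows "\<exists>M M'. perfect_matching V E M \<and> perfect_matching V E M' \<and>
    {v, x} \<in> M \<and> {v, x} \<in> M' \<and> M \<noteq> M'"
proof -
  let ?N = "neighbours E v"
  let ?W = "V - insert v ?N"
  have "\<not> tutte_condition ?W E"
  proof
    assume "tutte_condition ?W E"
    then obtain P where "perfect_matching ?W (induced_edges ?W E) P"
      using tutte_perfect_matching finite_V by blast
    then show False using vjoin_if_matching_outside_neighbourhood[OF v] no_join by blast
  qed
  then obtain S where S: "S \<subseteq> ?W" "card S < odd_components (?W - S) E"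
    unfolding tutte_condition_def by (auto simp: not_le)
  let ?T = "S \<union> ?N"
  have N: "?N \<subseteq> V - {v}" "card ?N = 3" "finite ?N"
    using neighbours_subset card_neighbours[OF v] finite_neighbours by simp_all
  have "v \<notin> ?N" using N(1) by blast
  then have "insert v ?N \<subseteq> V" "even (card (insert v ?N))" using N v by auto
  then have gap: "card S + 2 \<le> odd_components (?W - S) E"
    using odd_components_parity_gap[OF _ _ S(1)] S(2) by simp
  have v_closed: "edge_closed {v} (V - ?T) E"
    unfolding edge_closed_def using neighbours_iff by auto
  have "{v} \<subseteq> V - ?T" using v S N by auto
  then have v_comp: "{v} \<in> components (V - ?T) E"
    using edge_closed_connected_in_components[OF _ v_closed] by simp
  have "odd_components (V - ?T) E = odd_components {v} E + odd_components (V - ?T - {v}) E"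
    using odd_components_split[OF _ \<open>{v} \<subseteq> V - ?T\<close> v_closed] finite_V by simp
  moreover have "odd_components {v} E = 1" using odd_components_component[OF v_comp] by simp
  moreover have "V - ?T - {v} = ?W - S" by blast
  moreover have "card ?T = card S + 3"
    using S(1) N finite_V by (subst card_Un_disjoint) (auto intro: finite_subset)
  ultimately have "card ?T \<le> odd_components (V - ?T) E" using gap by simp
  moreover have "?T \<subseteq> V" "?T \<noteq> {}" using S(1) N by auto
  ultimately have tight: "tight_set ?T" by (intro tight_set_if_barrier)
  obtain M where M: "perfect_matching V E M" "{v, x} \<in> M"
    using edge_in_perfect_matching neighbours_iff x by blast
  interpret spoke_barrier V E ?T v x M
    using tight v_comp x M by unfold_locales auto
  have "?N - {x} \<noteq> {}"
  proof
    assume "?N - {x} = {}"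
    then have "card ?N \<le> card {x}" by (intro card_mono) auto
    then show False using N(2) by simp
  qed
  then have "?T - {x} \<noteq> {}" by blast
  then show ?thesis using two_perfect_matchings M by blast
qed

end

section \<open>Replacing a vertex by a triangle\<close>

lemma old_edge_spoke: "y \<noteq> v \<Longrightarrow> old_edge v {v, y} = {Inr y, Inl y}"
proof -
  assume "y \<noteq> v"
  then have "{v, y} - {v} = {y}" by auto
  then show ?thesis unfolding old_edge_def by simp
qed

lemma old_edge_avoiding: "v \<notin> e \<Longrightarrow> old_edge v e = Inl ` e"
  unfolding old_edge_def by simp

locale triangle_replacement = cubic_three_connected +
  fixes v :: 'a
  assumes v_in_V: "v \<in> V"
begin

abbreviation "N \<equiv> neighbours E v"
abbreviation "V' \<equiv> tri_vertices V E v"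
abbreviation "E' \<equiv> tri_edges V E v"

lemma edge_cases: "e \<in> E \<Longrightarrow> (\<exists>y. y \<noteq> v \<and> e = {v, y} \<and> y \<in> N) \<or> (v \<notin> e)"
proof -
  assume e: "e \<in> E"
  obtain a b where ab: "e = {a, b}" "a \<noteq> b" using graph_edgeE[OF graph e] by blast
  show ?thesis
  proof (cases "v \<in> e")
    case True
    then obtain y where "e = {v, y}" using ab by auto
    then show ?thesis using e ab neighbours_iff by (metis doubleton_eq_iff)
  qed simp
qed

lemma Inl_in_old_edge: "e \<in> E \<Longrightarrow> Inl u \<in> old_edge v e \<longleftrightarrow> u \<in> e \<and> u \<noteq> v"
proof -
  assume e: "e \<in> E"
  show ?thesis
  proof (cases "v \<in> e")
    case True
    then obtain y where y: "y \<noteq> v" "e = {v, y}" using edge_cases[OF e] by blast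
    show ?thesis unfolding y(2) old_edge_spoke[OF y(1)] using y(1) by auto
  next
    case False then show ?thesis unfolding old_edge_avoiding[OF False] by auto
  qed
qed

lemma Inr_in_old_edge: "e \<in> E \<Longrightarrow> Inr y \<in> old_edge v e \<longleftrightarrow> e = {v, y} \<and> y \<noteq> v"
proof -
  assume e: "e \<in> E"
  show ?thesis
  proof (cases "v \<in> e")
    case True
    then obtain y' where y: "y' \<noteq> v" "e = {v, y'}" using edge_cases[OF e] by blast
    show ?thesis unfolding y(2) old_edge_spoke[OF y(1)] using y(1) by (auto simp: doubleton_eq_iff)
  next
    case False then show ?thesis unfolding old_edge_avoiding[OF False] by auto
  qed
qed

lemma old_edge_has_Inl: "e \<in> E \<Longrightarrow> \<exists>u. Inl u \<in> old_edge v e"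
proof -
  assume e: "e \<in> E"
  obtain a b where ab: "e = {a, b}" "a \<noteq> b" using graph_edgeE[OF graph e] by blast
  then have "a \<noteq> v \<or> b \<noteq> v" by blast
  then show ?thesis using Inl_in_old_edge[OF e] ab by blast
qed

lemma old_edge_inj: "e \<in> E \<Longrightarrow> e' \<in> E \<Longrightarrow> old_edge v e = old_edge v e' \<Longrightarrow> e = e'"
proof -
  assume e: "e \<in> E" and e': "e' \<in> E" and eq: "old_edge v e = old_edge v e'"
  have "u \<in> e \<longleftrightarrow> u \<in> e'" if "u \<noteq> v" for u using Inl_in_old_edge[OF e, of u] Inl_in_old_edge[OF e', of u] eq that by simp
  moreover have "v \<in> e \<longleftrightarrow> v \<in> e'"
  proof -
    have "v \<in> e \<longleftrightarrow> (\<exists>y. Inr y \<in> old_edge v e)" using Inr_in_old_edge[OF e] edge_cases[OF e] by blast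
    moreover have "v \<in> e' \<longleftrightarrow> (\<exists>y. Inr y \<in> old_edge v e')" using Inr_in_old_edge[OF e'] edge_cases[OF e'] by blast
    ultimately show ?thesis using eq by simp
  qed
  ultimately have "\<forall>u. u \<in> e \<longleftrightarrow> u \<in> e'" by metis
  then show ?thesis by blast
qed

definition new_edges :: "('a + 'a) set set" where
  "new_edges = {{Inr y, Inr z} | y z. y \<in> N \<and> z \<in> N \<and> y \<noteq> z}"

lemma tri_edges_eq: "E' = old_edge v ` E \<union> new_edges"
  unfolding tri_edges_def new_edges_def by simp

lemma Inl_notin_new_edge: "f \<in> new_edges \<Longrightarrow> Inl u \<notin> f"
  unfolding new_edges_def by auto

lemma old_edge_notin_new_edges: "e \<in> E \<Longrightarrow> old_edge v e \<notin> new_edges"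
proof
  assume e: "e \<in> E" and t: "old_edge v e \<in> new_edges"
  obtain u where "Inl u \<in> old_edge v e" using old_edge_has_Inl[OF e] by blast
  then show False using Inl_notin_new_edge[OF t] by simp
qed

lemma tri_vertices_iff: "Inl u \<in> V' \<longleftrightarrow> u \<in> V \<and> u \<noteq> v" "Inr y \<in> V' \<longleftrightarrow> y \<in> N"
  unfolding tri_vertices_def by auto

definition old_part :: "('a + 'a) set set \<Rightarrow> 'a set set" where
  "old_part M' = {e \<in> E. old_edge v e \<in> M'}"

text \<open>The new edge added by \<open>lift_matching M\<close> joins the two triangle vertices whose old edges
  are not in \<open>M\<close>.\<close>

definition lift_matching :: "'a set set \<Rightarrow> ('a + 'a) set set" where
  "lift_matching M = old_edge v ` M \<union> {Inr ` {y \<in> N. {v, y} \<notin> M}}"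

definition lift_join :: "'a set set \<Rightarrow> ('a + 'a) set set" where
  "lift_join J = old_edge v ` J"

lemma spoke_in_E: "y \<in> N \<Longrightarrow> {v, y} \<in> E"
  using neighbours_iff by simp

lemma neighbour_in_V: "y \<in> N \<Longrightarrow> y \<noteq> v \<and> y \<in> V"
  using neighbours_subset by blast

lemma card_N: "card N = 3"
  using card_neighbours[OF v_in_V] .

lemma N_Diff_singleton:
  assumes "x \<in> N"
  shows "\<exists>y z. N - {x} = {y, z} \<and> y \<noteq> z"
proof -
  have "card (N - {x}) = 2" using card_N assms finite_neighbours by (simp add: card_Diff_singleton)
  then show ?thesis by (metis card_2_iff)
qed

lemma lift_matching_new_edge:
  assumes pm: "perfect_matching V E M" and x: "{v, x} \<in> M"
  shows "Inr ` {y \<in> N. {v, y} \<notin> M} = Inr ` (N - {x})" "Inr ` (N - {x}) \<in> new_edges" "x \<in> N"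
proof -
  show xN: "x \<in> N" using x perfect_matching_subset[OF pm] neighbours_iff by blast
  have "{y \<in> N. {v, y} \<notin> M} = N - {x}"
  proof
    show "{y \<in> N. {v, y} \<notin> M} \<subseteq> N - {x}" using x by auto
    show "N - {x} \<subseteq> {y \<in> N. {v, y} \<notin> M}"
    proof
      fix y assume y: "y \<in> N - {x}"
      have "{v, y} \<notin> M"
      proof
        assume "{v, y} \<in> M"
        then have "{v, y} = {v, x}" using perfect_matching_unique[OF pm v_in_V _ _ x] by simp
        then show False using y by (metis Diff_iff doubleton_eq_iff singletonI)
      qed
      then show "y \<in> {y \<in> N. {v, y} \<notin> M}" using y by simp
    qed
  qed
  then show "Inr ` {y \<in> N. {v, y} \<notin> M} = Inr ` (N - {x})" by simp
  obtain y z where yz: "N - {x} = {y, z}" "y \<noteq> z" using N_Diff_singleton[OF xN] by blast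
  then have "y \<in> N" "z \<in> N" by auto
  then show "Inr ` (N - {x}) \<in> new_edges" unfolding new_edges_def yz(1) using yz(2) by auto
qed

lemma lift_matching_perfect:
  assumes pm: "perfect_matching V E M"
  shows "perfect_matching V' E' (lift_matching M)"
proof -
  obtain x where x: "{v, x} \<in> M"
  proof -
    obtain e where e: "e \<in> M" "v \<in> e" using perfect_matching_covers[OF pm v_in_V] by blast
    then have "e \<in> E" using perfect_matching_subset[OF pm] by blast
    then obtain y where "e = {v, y}" using edge_cases e(2) by blast
    then show ?thesis using that e by blast
  qed
  note pt = lift_matching_new_edge[OF pm x]
  define f :: "('a + 'a) set" where "f = Inr ` (N - {x})"
  have PhiM: "lift_matching M = old_edge v ` M \<union> {f}" unfolding lift_matching_def f_def pt(1) ..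
  have ME: "M \<subseteq> E" using perfect_matching_subset[OF pm] .
  show ?thesis
    unfolding perfect_matching_def
  proof (intro conjI ballI)
    show "lift_matching M \<subseteq> E'" unfolding PhiM tri_edges_eq using ME pt(2) f_def by blast
    fix w assume w: "w \<in> V'"
    show "\<exists>!e. e \<in> lift_matching M \<and> w \<in> e"
    proof (cases w)
      case (Inl u)
      then have u: "u \<in> V" "u \<noteq> v" using w tri_vertices_iff by auto
      obtain e0 where e0: "e0 \<in> M" "u \<in> e0" using perfect_matching_covers[OF pm u(1)] by blast
      show ?thesis
      proof (rule ex1I[of _ "old_edge v e0"])
        show "old_edge v e0 \<in> lift_matching M \<and> w \<in> old_edge v e0"
          unfolding PhiM Inl using e0 Inl_in_old_edge ME u by blast
        fix e' assume e': "e' \<in> lift_matching M \<and> w \<in> e'"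
        then have "e' \<noteq> f" unfolding Inl f_def by auto
        then obtain e where e: "e \<in> M" "e' = old_edge v e" using e' unfolding PhiM by blast
        then have "u \<in> e" using e' Inl_in_old_edge ME unfolding Inl by blast
        then have "e = e0" using perfect_matching_unique[OF pm u(1) e(1) _ e0] by simp
        then show "e' = old_edge v e0" using e by simp
      qed
    next
      case (Inr y)
      then have yN: "y \<in> N" using w tri_vertices_iff by auto
      show ?thesis
      proof (cases "y = x")
        case True
        show ?thesis
        proof (rule ex1I[of _ "old_edge v {v, x}"])
          show "old_edge v {v, x} \<in> lift_matching M \<and> w \<in> old_edge v {v, x}"
            unfolding PhiM Inr True using x old_edge_spoke[of x v] neighbour_in_V[OF pt(3)] by auto
          fix e' assume e': "e' \<in> lift_matching M \<and> w \<in> e'"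
          then have "e' \<noteq> f" unfolding Inr f_def True by auto
          then obtain e where e: "e \<in> M" "e' = old_edge v e" using e' unfolding PhiM by blast
          then have "e = {v, y}" using e' Inr_in_old_edge ME unfolding Inr by blast
          then show "e' = old_edge v {v, x}" using e True by simp
        qed
      next
        case False
        show ?thesis
        proof (rule ex1I[of _ f])
          show "f \<in> lift_matching M \<and> w \<in> f" unfolding PhiM Inr f_def using yN False by auto
          fix e' assume e': "e' \<in> lift_matching M \<and> w \<in> e'"
          show "e' = f"
          proof (rule ccontr)
            assume "e' \<noteq> f"
            then obtain e where e: "e \<in> M" "e' = old_edge v e" using e' unfolding PhiM by blast
            then have "e = {v, y}" using e' Inr_in_old_edge ME unfolding Inr by blast
            then have "{v, y} = {v, x}" using perfect_matching_unique[OF pm v_in_V _ _ x] e by simp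
            then show False using False by (metis doubleton_eq_iff)
          qed
        qed
      qed
    qed
  qed
qed

lemma vjoin_spokes:
  assumes J: "vjoin V E v J" and yN: "y \<in> N"
  shows "{v, y} \<in> J"
proof -
  have JE: "J \<subseteq> E" using J unfolding vjoin_def by simp
  have sub: "{e \<in> J. v \<in> e} \<subseteq> {e \<in> E. v \<in> e}" using JE by blast
  have "card {e \<in> J. v \<in> e} = 3" using J unfolding vjoin_def degree_def by simp
  moreover have "card {e \<in> E. v \<in> e} = 3" using degree_3[OF v_in_V] unfolding degree_def .
  moreover have "finite {e \<in> E. v \<in> e}" using finite_E by simp
  ultimately have "{e \<in> J. v \<in> e} = {e \<in> E. v \<in> e}" using card_subset_eq sub by metis
  then show ?thesis using spoke_in_E[OF yN] by blast
qed

lemma vjoin_unique: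
  assumes J: "vjoin V E v J" and u: "u \<in> V" "u \<noteq> v"
  shows "\<exists>!e. e \<in> J \<and> u \<in> e"
proof -
  have "card {e \<in> J. u \<in> e} = 1" using J u unfolding vjoin_def degree_def by simp
  then obtain e0 where "{e \<in> J. u \<in> e} = {e0}" by (rule card_1_singletonE)
  then show ?thesis by (metis (mono_tags, lifting) mem_Collect_eq singleton_iff)
qed

lemma lift_join_perfect:
  assumes J: "vjoin V E v J"
  shows "perfect_matching V' E' (lift_join J)"
proof -
  have JE: "J \<subseteq> E" using J unfolding vjoin_def by simp
  show ?thesis
    unfolding perfect_matching_def
  proof (intro conjI ballI)
    show "lift_join J \<subseteq> E'" unfolding lift_join_def tri_edges_eq using JE by blast
    fix w assume w: "w \<in> V'"
    show "\<exists>!e. e \<in> lift_join J \<and> w \<in> e"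
    proof (cases w)
      case (Inl u)
      then have u: "u \<in> V" "u \<noteq> v" using w tri_vertices_iff by auto
      have ex: "\<exists>!e. e \<in> J \<and> u \<in> e" by (rule vjoin_unique[OF J u])
      then obtain e0 where e0: "e0 \<in> J" "u \<in> e0" by blast
      show ?thesis
      proof (rule ex1I[of _ "old_edge v e0"])
        show "old_edge v e0 \<in> lift_join J \<and> w \<in> old_edge v e0"
          unfolding lift_join_def Inl using e0 Inl_in_old_edge JE u by blast
        fix e' assume e': "e' \<in> lift_join J \<and> w \<in> e'"
        then obtain e where e: "e \<in> J" "e' = old_edge v e" unfolding lift_join_def by blast
        then have "u \<in> e" using e' Inl_in_old_edge JE unfolding Inl by blast
        then have "e = e0" using ex e0 e by blast
        then show "e' = old_edge v e0" using e by simp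
      qed
    next
      case (Inr y)
      then have yN: "y \<in> N" using w tri_vertices_iff by auto
      show ?thesis
      proof (rule ex1I[of _ "old_edge v {v, y}"])
        show "old_edge v {v, y} \<in> lift_join J \<and> w \<in> old_edge v {v, y}"
          unfolding lift_join_def Inr using vjoin_spokes[OF J yN] old_edge_spoke[of y v] neighbour_in_V[OF yN] by auto
        fix e' assume e': "e' \<in> lift_join J \<and> w \<in> e'"
        then obtain e where e: "e \<in> J" "e' = old_edge v e" unfolding lift_join_def by blast
        then have "e = {v, y}" using e' Inr_in_old_edge JE unfolding Inr by blast
        then show "e' = old_edge v {v, y}" using e by simp
      qed
    qed
  qed
qed


lemma N_eq:
  assumes "y \<in> N" "z \<in> N" "w \<in> N" "y \<noteq> z" "y \<noteq> w" "z \<noteq> w"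
  shows "N = {y, z, w}"
proof -
  have sub: "{y, z, w} \<subseteq> N" using assms by simp
  have "card {y, z, w} = 3" using assms by simp
  then show ?thesis using card_subset_eq[OF finite_neighbours sub] card_N by simp
qed

lemma old_part_subset: "old_part M' \<subseteq> E"
  unfolding old_part_def by blast

context
  fixes M' assumes pm': "perfect_matching V' E' M'"
begin

lemma in_old_part: "e \<in> old_part M' \<longleftrightarrow> e \<in> E \<and> old_edge v e \<in> M'"
  unfolding old_part_def by simp

lemma tri_matching_edge_cases:
  assumes "e' \<in> M'"
  shows "(\<exists>e\<in>old_part M'. e' = old_edge v e) \<or> e' \<in> new_edges"
proof -
  have "e' \<in> old_edge v ` E \<or> e' \<in> new_edges"
    using pm' assms unfolding perfect_matching_def tri_edges_eq by blast
  then show ?thesis using assms in_old_part by blast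
qed

lemma old_part_unique:
  assumes u: "u \<in> V" "u \<noteq> v"
  shows "\<exists>!e. e \<in> old_part M' \<and> u \<in> e"
proof -
  have w: "Inl u \<in> V'" using tri_vertices_iff u by simp
  obtain e' where e': "e' \<in> M'" "Inl u \<in> e'" using perfect_matching_covers[OF pm' w] by blast
  then have "e' \<notin> new_edges" using Inl_notin_new_edge by blast
  then obtain e where e: "e \<in> old_part M'" "e' = old_edge v e"
    using tri_matching_edge_cases[OF e'(1)] by blast
  have ue: "u \<in> e" using e e' Inl_in_old_edge old_part_subset by blast
  show ?thesis
  proof (rule ex1I[of _ e])
    fix e2 assume e2: "e2 \<in> old_part M' \<and> u \<in> e2"
    then have "Inl u \<in> old_edge v e2" using Inl_in_old_edge old_part_subset u by blast
    then have "old_edge v e2 = e'" using perfect_matching_unique[OF pm' w _ _ e'] e2 in_old_part by blast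
    then show "e2 = e" using old_edge_inj old_part_subset e e2 by blast
  qed (use e ue in simp)
qed

lemma new_vertex_covered:
  assumes y: "y \<in> N"
  shows "{v, y} \<in> old_part M' \<or> (\<exists>z\<in>N. z \<noteq> y \<and> {Inr y, Inr z} \<in> M')"
proof -
  have w: "Inr y \<in> V'" using tri_vertices_iff y by simp
  obtain e' where e': "e' \<in> M'" "Inr y \<in> e'" using perfect_matching_covers[OF pm' w] by blast
  show ?thesis
  proof (cases "e' \<in> new_edges")
    case True
    then obtain a b where ab: "e' = {Inr a, Inr b}" "a \<in> N" "b \<in> N" "a \<noteq> b"
      unfolding new_edges_def by blast
    then have "y = a \<or> y = b" using e' by auto
    then show ?thesis
    proof
      assume "y = a"
      then show ?thesis using ab e'(1) by (intro disjI2 bexI[of _ b]) auto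
    next
      assume "y = b"
      then show ?thesis using ab e'(1) by (auto simp: insert_commute)
    qed
  next
    case False
    then obtain e where e: "e \<in> old_part M'" "e' = old_edge v e"
      using tri_matching_edge_cases[OF e'(1)] by blast
    then have "e = {v, y}" using Inr_in_old_edge old_part_subset e' by blast
    then show ?thesis using e by simp
  qed
qed

lemma spoke_excludes_new_edge:
  assumes "{v, a} \<in> old_part M'" "a \<in> N"
  shows "{Inr a, Inr b} \<notin> M'"
proof
  assume ab: "{Inr a, Inr b} \<in> M'"
  have w: "Inr a \<in> V'" using tri_vertices_iff assms(2) by simp
  have spoke: "old_edge v {v, a} = {Inr a, Inl a}"
    using old_edge_spoke[of a v] neighbour_in_V[OF assms(2)] by simp
  then have "old_edge v {v, a} \<in> M'" "Inr a \<in> old_edge v {v, a}" using assms in_old_part by auto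
  then have "old_edge v {v, a} = {Inr a, Inr b}" using perfect_matching_unique[OF pm' w _ _ ab] by blast
  then show False using spoke by (metis insertCI insertE sum.distinct(1) singletonD)
qed

lemma new_edges_meeting_eq:
  assumes "{Inr a, Inr b} \<in> M'" "{Inr c, Inr d} \<in> M'" "t \<in> {a, b}" "t \<in> {c, d}" "t \<in> N"
  shows "{Inr a, Inr b} = ({Inr c, Inr d} :: ('a + 'a) set)"
proof -
  have w: "Inr t \<in> V'" using tri_vertices_iff assms(5) by simp
  have "Inr t \<in> {Inr a, Inr b}" "Inr t \<in> {Inr c, Inr d}" using assms(3,4) by auto
  then show ?thesis by (rule perfect_matching_unique[OF pm' w assms(1) _ assms(2)])
qed

lemma tri_matching_all_spokes:
  assumes spokes: "\<forall>y\<in>N. {v, y} \<in> old_part M'"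
  shows "vjoin V E v (old_part M') \<and> M' = lift_join (old_part M')"
proof
  let ?B = "old_part M'"
  have "{e \<in> ?B. v \<in> e} = {e \<in> E. v \<in> e}"
  proof
    show "{e \<in> ?B. v \<in> e} \<subseteq> {e \<in> E. v \<in> e}" using old_part_subset by blast
    show "{e \<in> E. v \<in> e} \<subseteq> {e \<in> ?B. v \<in> e}" unfolding edges_at using spokes by blast
  qed
  then have "degree ?B v = 3" using degree_3[OF v_in_V] unfolding degree_def by simp
  moreover have "degree ?B u = 1" if "u \<in> V - {v}" for u
    using old_part_unique[of u] that by (simp only: degree_eq_1_iff) blast
  ultimately show "vjoin V E v ?B" using old_part_subset unfolding vjoin_def by blast
  show "M' = lift_join ?B"
  proof
    show "lift_join ?B \<subseteq> M'" unfolding lift_join_def using in_old_part by blast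
    show "M' \<subseteq> lift_join ?B"
    proof
      fix e' assume e': "e' \<in> M'"
      show "e' \<in> lift_join ?B"
      proof (cases "e' \<in> new_edges")
        case True
        then obtain a b where ab: "e' = {Inr a, Inr b}" "a \<in> N" unfolding new_edges_def by blast
        then show ?thesis using spoke_excludes_new_edge[of a b] spokes e' by auto
      next
        case False
        then show ?thesis using tri_matching_edge_cases[OF e'] unfolding lift_join_def by blast
      qed
    qed
  qed
qed

text \<open>If some spoke \<open>vy\<close> is missing, \<open>Inr y\<close> is matched along a new edge \<open>Inr y Inr z\<close>; then the
  third neighbour \<open>w\<close> must use its spoke, which matches \<open>v\<close> in \<open>G\<close>.\<close>

lemma tri_matching_missing_spoke:
  assumes y: "y \<in> N" "{v, y} \<notin> old_part M'"
  shows "perfect_matching V E (old_part M') \<and> M' = lift_matching (old_part M')"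
proof
  let ?B = "old_part M'"
  obtain z where z: "z \<in> N" "z \<noteq> y" "{Inr y, Inr z} \<in> M'" using new_vertex_covered[OF y(1)] y(2) by blast
  have zB: "{v, z} \<notin> ?B" using spoke_excludes_new_edge[of z y] z by (metis insert_commute)
  obtain w where w: "w \<in> N" "w \<noteq> y" "w \<noteq> z"
  proof -
    have "N - {y, z} \<noteq> {}"
    proof
      assume "N - {y, z} = {}"
      then have "card N \<le> card {y, z}" by (intro card_mono) auto
      then show False using card_N z(2) by simp
    qed
    then show ?thesis using that by blast
  qed
  have Neq: "N = {y, z, w}" using N_eq[OF y(1) z(1) w(1)] z(2) w by auto
  have wB: "{v, w} \<in> ?B"
  proof (rule ccontr)
    assume "{v, w} \<notin> ?B"
    then obtain t where t: "t \<in> N" "t \<noteq> w" "{Inr w, Inr t} \<in> M'" using new_vertex_covered[OF w(1)] by blast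
    then have "t = y \<or> t = z" using Neq by auto
    then have "{Inr w, Inr t} = {Inr y, Inr z}" using new_edges_meeting_eq[OF t(3) z(3), of t] t(1) by auto
    then show False using w by (metis doubleton_eq_iff sum.inject(2))
  qed
  show "perfect_matching V E ?B"
    unfolding perfect_matching_def
  proof (intro conjI ballI)
    show "?B \<subseteq> E" by (rule old_part_subset)
    fix u assume u: "u \<in> V"
    show "\<exists>!e. e \<in> ?B \<and> u \<in> e"
    proof (cases "u = v")
      case False then show ?thesis using old_part_unique u by blast
    next
      case True
      show ?thesis
      proof (rule ex1I[of _ "{v, w}"])
        fix e assume e: "e \<in> ?B \<and> u \<in> e"
        then have "e \<in> (\<lambda>y. {v, y}) ` N" using edges_at old_part_subset True by blast
        then obtain t where t: "t \<in> N" "e = {v, t}" by blast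
        then have "t = w" using e y(2) zB Neq by auto
        then show "e = {v, w}" using t by simp
      qed (use wB True in simp)
    qed
  qed
  have tset: "{t \<in> N. {v, t} \<notin> ?B} = {y, z}" using Neq y(2) zB wB by auto
  show "M' = lift_matching ?B"
  proof
    show "lift_matching ?B \<subseteq> M'" unfolding lift_matching_def tset using in_old_part z(3) by auto
    show "M' \<subseteq> lift_matching ?B"
    proof
      fix e' assume e': "e' \<in> M'"
      show "e' \<in> lift_matching ?B"
      proof (cases "e' \<in> new_edges")
        case True
        then obtain a b where ab: "e' = {Inr a, Inr b}" "a \<in> N" "b \<in> N" "a \<noteq> b"
          unfolding new_edges_def by blast
        have "a \<noteq> w" using spoke_excludes_new_edge[of a b] ab wB e' by auto
        then have "a = y \<or> a = z" using ab Neq by auto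
        then have "e' = {Inr y, Inr z}" using new_edges_meeting_eq[OF _ z(3), of a b a] e' ab by auto
        then show ?thesis unfolding lift_matching_def tset by simp
      next
        case False
        then show ?thesis using tri_matching_edge_cases[OF e'] unfolding lift_matching_def by blast
      qed
    qed
  qed
qed

lemma perfect_matching_tri_cases:
  "(perfect_matching V E (old_part M') \<and> M' = lift_matching (old_part M')) \<or>
   (vjoin V E v (old_part M') \<and> M' = lift_join (old_part M'))"
  using tri_matching_all_spokes tri_matching_missing_spoke by blast

end


lemma matching_partner: "perfect_matching V E M \<Longrightarrow> \<exists>x. {v, x} \<in> M"
proof -
  assume pm: "perfect_matching V E M"
  obtain e where e: "e \<in> M" "v \<in> e" using perfect_matching_covers[OF pm v_in_V] by blast
  then have "e \<in> E" using perfect_matching_subset[OF pm] by blast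
  then obtain y where "e = {v, y}" using edge_cases e(2) by blast
  then show ?thesis using e by blast
qed

lemma lift_matching_eq:
  "perfect_matching V E M \<Longrightarrow> {v, x} \<in> M \<Longrightarrow> lift_matching M = old_edge v ` M \<union> {Inr ` (N - {x})}"
proof -
  assume a: "perfect_matching V E M" "{v, x} \<in> M"
  show ?thesis unfolding lift_matching_def lift_matching_new_edge(1)[OF a] ..
qed

lemma old_part_lift_matching: "perfect_matching V E M \<Longrightarrow> old_part (lift_matching M) = M"
proof -
  assume pm: "perfect_matching V E M"
  obtain x where x: "{v, x} \<in> M" using matching_partner[OF pm] by blast
  have ME: "M \<subseteq> E" using perfect_matching_subset[OF pm] .
  have ft: "Inr ` (N - {x}) \<in> new_edges" using lift_matching_new_edge(2)[OF pm x] .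
  show ?thesis
  proof
    show "old_part (lift_matching M) \<subseteq> M"
    proof
      fix e assume "e \<in> old_part (lift_matching M)"
      then have e: "e \<in> E" "old_edge v e \<in> lift_matching M" unfolding old_part_def by auto
      have "old_edge v e \<noteq> Inr ` (N - {x})" using old_edge_notin_new_edges[OF e(1)] ft by metis
      then have "old_edge v e \<in> old_edge v ` M" using e(2) unfolding lift_matching_eq[OF pm x] by blast
      then obtain e' where "e' \<in> M" "old_edge v e = old_edge v e'" by blast
      then show "e \<in> M" using old_edge_inj[OF e(1)] ME by blast
    qed
    show "M \<subseteq> old_part (lift_matching M)" unfolding old_part_def lift_matching_def using ME by blast
  qed
qed

lemma old_part_lift_join: "J \<subseteq> E \<Longrightarrow> old_part (lift_join J) = J"
proof -
  assume JE: "J \<subseteq> E"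
  show ?thesis
  proof
    show "old_part (lift_join J) \<subseteq> J"
    proof
      fix e assume "e \<in> old_part (lift_join J)"
      then have e: "e \<in> E" "old_edge v e \<in> old_edge v ` J" unfolding old_part_def lift_join_def by auto
      then obtain e' where "e' \<in> J" "old_edge v e = old_edge v e'" by blast
      then show "e \<in> J" using old_edge_inj[OF e(1)] JE by blast
    qed
    show "J \<subseteq> old_part (lift_join J)" unfolding old_part_def lift_join_def using JE by blast
  qed
qed

lemma lift_matching_ne_lift_join: "perfect_matching V E M \<Longrightarrow> J \<subseteq> E \<Longrightarrow> lift_matching M \<noteq> lift_join J"
proof
  assume pm: "perfect_matching V E M" and JE: "J \<subseteq> E" and eq: "lift_matching M = lift_join J"
  obtain x where x: "{v, x} \<in> M" using matching_partner[OF pm] by blast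
  have "Inr ` (N - {x}) \<in> lift_join J" using eq unfolding lift_matching_eq[OF pm x] by auto
  then obtain e where e: "e \<in> J" "Inr ` (N - {x}) = old_edge v e" unfolding lift_join_def by blast
  have "e \<in> E" using e(1) JE by blast
  from old_edge_notin_new_edges[OF this] lift_matching_new_edge(2)[OF pm x] e(2) show False by metis
qed

lemma finite_matchings: "finite {M. perfect_matching V E M \<and> P M}"
proof (rule finite_subset)
  show "{M. perfect_matching V E M \<and> P M} \<subseteq> Pow E" using perfect_matching_subset by blast
  show "finite (Pow E)" using finite_E by simp
qed

lemma finite_vjoins: "finite {J. vjoin V E v J \<and> P J}"
proof (rule finite_subset)
  show "{J. vjoin V E v J \<and> P J} \<subseteq> Pow E" unfolding vjoin_def by blast
  show "finite (Pow E)" using finite_E by simp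
qed

lemma card_matchings_old_edge:
  assumes e: "e \<in> E"
  shows "card {M'. perfect_matching V' E' M' \<and> old_edge v e \<in> M'}
       = card {M. perfect_matching V E M \<and> e \<in> M} + card {J. vjoin V E v J \<and> e \<in> J}"
proof -
  define A where "A = {M. perfect_matching V E M \<and> e \<in> M}"
  define B where "B = {J. vjoin V E v J \<and> e \<in> J}"
  have eq: "{M'. perfect_matching V' E' M' \<and> old_edge v e \<in> M'} = lift_matching ` A \<union> lift_join ` B"
  proof
    show "{M'. perfect_matching V' E' M' \<and> old_edge v e \<in> M'} \<subseteq> lift_matching ` A \<union> lift_join ` B"
    proof
      fix M' assume M': "M' \<in> {M'. perfect_matching V' E' M' \<and> old_edge v e \<in> M'}"
      then have pm': "perfect_matching V' E' M'" and oe: "old_edge v e \<in> M'" by auto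
      have eB: "e \<in> old_part M'" unfolding old_part_def using e oe by simp
      from perfect_matching_tri_cases[OF pm'] show "M' \<in> lift_matching ` A \<union> lift_join ` B"
      proof
        assume "perfect_matching V E (old_part M') \<and> M' = lift_matching (old_part M')"
        then show ?thesis unfolding A_def using eB by blast
      next
        assume "vjoin V E v (old_part M') \<and> M' = lift_join (old_part M')"
        then show ?thesis unfolding B_def using eB by blast
      qed
    qed
    show "lift_matching ` A \<union> lift_join ` B \<subseteq> {M'. perfect_matching V' E' M' \<and> old_edge v e \<in> M'}"
    proof
      fix M' assume "M' \<in> lift_matching ` A \<union> lift_join ` B"
      then consider (a) M where "M \<in> A" "M' = lift_matching M" | (b) J where "J \<in> B" "M' = lift_join J" by blast
      then show "M' \<in> {M'. perfect_matching V' E' M' \<and> old_edge v e \<in> M'}"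
      proof cases
        case a
        then show ?thesis using lift_matching_perfect unfolding A_def lift_matching_def by auto
      next
        case b
        then show ?thesis using lift_join_perfect unfolding B_def lift_join_def by auto
      qed
    qed
  qed
  have finA: "finite A" unfolding A_def by (rule finite_matchings)
  have finB: "finite B" unfolding B_def by (rule finite_vjoins)
  have injA: "inj_on lift_matching A" by (rule inj_onI) (metis (mono_tags, lifting) A_def old_part_lift_matching mem_Collect_eq)
  have injB: "inj_on lift_join B"
  proof (rule inj_onI)
    fix J1 J2 assume "J1 \<in> B" "J2 \<in> B" "lift_join J1 = lift_join J2"
    then show "J1 = J2" using old_part_lift_join unfolding B_def vjoin_def by (metis (mono_tags, lifting) mem_Collect_eq)
  qed
  have dis: "lift_matching ` A \<inter> lift_join ` B = {}"
    using lift_matching_ne_lift_join unfolding A_def B_def vjoin_def by blast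
  have "card (lift_matching ` A \<union> lift_join ` B) = card (lift_matching ` A) + card (lift_join ` B)"
    using card_Un_disjoint[OF finite_imageI[OF finA] finite_imageI[OF finB] dis] .
  then show ?thesis unfolding eq A_def[symmetric] B_def[symmetric]
    using card_image[OF injA] card_image[OF injB] by simp
qed

lemma card_matchings_new_edge:
  assumes x: "x \<in> N"
  shows "card {M'. perfect_matching V' E' M' \<and> Inr ` (N - {x}) \<in> M'}
       = card {M. perfect_matching V E M \<and> {v, x} \<in> M}"
proof -
  define A where "A = {M. perfect_matching V E M \<and> {v, x} \<in> M}"
  define f :: "('a + 'a) set" where "f = Inr ` (N - {x})"
  have ftri: "f \<in> new_edges"
  proof -
    obtain y z where yz: "N - {x} = {y, z}" "y \<noteq> z" using N_Diff_singleton[OF x] by blast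
    then have "y \<in> N" "z \<in> N" by auto
    then show ?thesis unfolding new_edges_def f_def yz(1) using yz(2) by auto
  qed
  have eq: "{M'. perfect_matching V' E' M' \<and> f \<in> M'} = lift_matching ` A"
  proof
    show "{M'. perfect_matching V' E' M' \<and> f \<in> M'} \<subseteq> lift_matching ` A"
    proof
      fix M' assume M': "M' \<in> {M'. perfect_matching V' E' M' \<and> f \<in> M'}"
      then have pm': "perfect_matching V' E' M'" and fM: "f \<in> M'" by auto
      from perfect_matching_tri_cases[OF pm'] show "M' \<in> lift_matching ` A"
      proof
        assume h: "perfect_matching V E (old_part M') \<and> M' = lift_matching (old_part M')"
        obtain x0 where x0: "{v, x0} \<in> old_part M'" using matching_partner h by blast
        have x0N: "x0 \<in> N" using lift_matching_new_edge(3) h x0 by blast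
        have "f \<in> old_edge v ` old_part M' \<union> {Inr ` (N - {x0})}" using fM h lift_matching_eq x0 by metis
        moreover have "f \<notin> old_edge v ` old_part M'" using ftri old_edge_notin_new_edges unfolding old_part_def by blast
        ultimately have "Inr ` (N - {x}) = Inr ` (N - {x0})" unfolding f_def by blast
        then have "N - {x} = N - {x0}" by (simp add: inj_image_eq_iff)
        then have "x = x0" using x x0N by blast
        then show ?thesis unfolding A_def using h x0 by blast
      next
        assume h: "vjoin V E v (old_part M') \<and> M' = lift_join (old_part M')"
        have "old_part M' \<subseteq> E" unfolding old_part_def by blast
        then have "f \<notin> lift_join (old_part M')" unfolding lift_join_def using ftri old_edge_notin_new_edges by blast
        then show ?thesis using h fM by simp
      qed
    qed
    show "lift_matching ` A \<subseteq> {M'. perfect_matching V' E' M' \<and> f \<in> M'}"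
    proof
      fix M' assume "M' \<in> lift_matching ` A"
      then obtain M where M: "perfect_matching V E M" "{v, x} \<in> M" "M' = lift_matching M" unfolding A_def by blast
      then show "M' \<in> {M'. perfect_matching V' E' M' \<and> f \<in> M'}"
        using lift_matching_perfect[OF M(1)] lift_matching_eq[OF M(1,2)] unfolding f_def by simp
    qed
  qed
  have injA: "inj_on lift_matching A" by (rule inj_onI) (metis (mono_tags, lifting) A_def old_part_lift_matching mem_Collect_eq)
  show ?thesis using eq card_image[OF injA] unfolding f_def A_def by simp
qed

text \<open>Every edge of \<open>G\<close> lies in a perfect matching, so an old edge is lonely in \<open>G\<^sup>v\<close> exactly when
  it lies in one perfect matching of \<open>G\<close> and in no \<open>v\<close>-join.\<close>

lemma lonely_old_edge_iff:
  assumes e: "e \<in> E"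
  shows "lonely V' E' (old_edge v e) \<longleftrightarrow> lonely V E e \<and> \<not> (\<exists>J. vjoin V E v J \<and> e \<in> J)"
proof -
  let ?A = "{M. perfect_matching V E M \<and> e \<in> M}"
  let ?B = "{J. vjoin V E v J \<and> e \<in> J}"
  obtain a b where "e = {a, b}" using graph_edgeE[OF graph e] by blast
  then obtain M where "M \<in> ?A" using edge_in_perfect_matching e by blast
  then have "card ?A \<noteq> 0" using finite_matchings[of "\<lambda>M. e \<in> M"] by auto
  moreover have "card ?B = 0 \<longleftrightarrow> \<not> (\<exists>J. vjoin V E v J \<and> e \<in> J)"
    using finite_vjoins[of "\<lambda>J. e \<in> J"] by simp
  moreover have "old_edge v e \<in> E'" unfolding tri_edges_eq using e by blast
  ultimately show ?thesis unfolding lonely_def using card_matchings_old_edge[OF e] e by auto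
qed

text \<open>The spoke \<open>vx\<close> lies either in a \<open>v\<close>-join and a perfect matching of \<open>G\<close>, or, if there is no
  \<open>v\<close>-join, in two perfect matchings of \<open>G\<close>.\<close>

lemma not_lonely_spoke:
  assumes x: "x \<in> N"
  shows "\<not> lonely V' E' (old_edge v {v, x})"
proof -
  have vx: "{v, x} \<in> E" using spoke_in_E[OF x] .
  let ?A = "{M. perfect_matching V E M \<and> {v, x} \<in> M}"
  let ?B = "{J. vjoin V E v J \<and> {v, x} \<in> J}"
  have finA: "finite ?A" by (rule finite_matchings)
  have finB: "finite ?B" by (rule finite_vjoins)
  obtain M where "M \<in> ?A" using edge_in_perfect_matching[OF vx] by blast
  then have A: "card ?A \<noteq> 0" using finA by auto
  have "card ?A + card ?B \<ge> 2"
  proof (cases "\<exists>J. vjoin V E v J")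
    case True
    then obtain J where J: "vjoin V E v J" by blast
    then have "J \<in> ?B" using vjoin_spokes[OF J x] by blast
    then have "card ?B \<noteq> 0" using finB by auto
    then show ?thesis using A by simp
  next
    case False
    then obtain M1 M2 where "M1 \<in> ?A" "M2 \<in> ?A" "M1 \<noteq> M2"
      using two_perfect_matchings_if_no_vjoin[OF v_in_V x] by blast
    then have "card {M1, M2} \<le> card ?A" using finA by (intro card_mono) auto
    then show ?thesis using \<open>M1 \<noteq> M2\<close> by simp
  qed
  then show ?thesis unfolding lonely_def using card_matchings_old_edge[OF vx] by simp
qed

lemma lonely_new_edge_iff:
  assumes "x \<in> N" "y \<in> N" "z \<in> N" "x \<noteq> y" "y \<noteq> z" "x \<noteq> z"
  shows "lonely V' E' {Inr y, Inr z} \<longleftrightarrow> lonely V E {v, x}"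
proof -
  have "N - {x} = {y, z}" using N_eq[OF assms(1,2,3)] assms(4-6) by auto
  moreover have "{Inr y, Inr z} \<in> E'" unfolding tri_edges_eq new_edges_def using assms by blast
  ultimately show ?thesis
    unfolding lonely_def using card_matchings_new_edge[OF assms(1)] spoke_in_E[OF assms(1)] by simp
qed


end

theorem mainTheorem7:
  fixes V :: "'a set" and E :: "'a set set" and v :: 'a
  assumes "classU V E" and "v \<in> V"
  shows
    "(\<forall>e\<in>E. lonely (tri_vertices V E v) (tri_edges V E v) (old_edge v e) \<longleftrightarrow>
              lonely V E e \<and> \<not> (\<exists>J. vjoin V E v J \<and> e \<in> J))
     \<and> (\<forall>x y z. x \<in> neighbours E v \<and> y \<in> neighbours E v \<and> z \<in> neighbours E v \<and>
              x \<noteq> y \<and> y \<noteq> z \<and> x \<noteq> z \<longrightarrow>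
         \<not> lonely (tri_vertices V E v) (tri_edges V E v) (old_edge v {v, x})
         \<and> (lonely (tri_vertices V E v) (tri_edges V E v) {Inr y, Inr z} \<longleftrightarrow>
            lonely V E {v, x}))"
proof -
  interpret triangle_replacement V E v
    using assms unfolding classU_def by unfold_locales auto
  have "\<forall>e\<in>E. lonely V' E' (old_edge v e) \<longleftrightarrow>
      lonely V E e \<and> \<not> (\<exists>J. vjoin V E v J \<and> e \<in> J)"
    using lonely_old_edge_iff by blast
  moreover have "\<forall>x y z. x \<in> N \<and> y \<in> N \<and> z \<in> N \<and> x \<noteq> y \<and> y \<noteq> z \<and> x \<noteq> z \<longrightarrow>
      \<not> lonely V' E' (old_edge v {v, x}) \<and> (lonely V' E' {Inr y, Inr z} \<longleftrightarrow> lonely V E {v, x})"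
    using not_lonely_spoke lonely_new_edge_iff by blast
  ultimately show ?thesis by (rule conjI)
qed

end
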